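(* In the setting below, any two primitive isometric embeddings of $P(-1)$ into the Niemeier lattice $N$ of type $A_2^{12}$ differ by an automorphism of $N$: if $\iota_1,\iota_2\colon P(-1)\hookrightarrow N$ are primitive embeddings, there is $\Phi\in\mathrm{Aut}(N)$ with $\Phi\circ\iota_1=\iota_2$.
   Context: $X$ is the minimal resolution of $T/\mathbb Z_3$, where $T=\mathbb C^2/L$, $L$ generated by $(1,0),(\xi,0),(0,1),(0,\xi)$, $\xi=e^{2\pi i/3}$, and $\mathbb Z_3$ acts via $(z_1,z_2)\mapsto(\xi z_1,\xi^{-1}z_2)$. $R\subset H^2(X,\mathbb Z)$ is spanned by the Poincaré duals of the 18 exceptional $(-2)$-curves (type $A_2^9$), $P=(R\otimes\mathbb Q)\cap H^2(X,\mathbb Z)$ with the intersection form, and $P(-1)$ is $P$ with form negated (positive definite of rank 18). $N$ is the Niemeier lattice with root system $A_2^{12}$ (the unique up to isometry even unimodular positive definite rank-24 lattice with that root system). An embedding is primitive if the quotient of $N$ by the image is torsion-free. *)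

theory Defs
  imports "HOL-Analysis.Analysis" "HOL-Library.Numeral_Type"
begin

text \<open>A full-rank lattice in real^24 (the positive definite form is the standard dot product).\<close>
definition full_lattice24 :: "(real^24) set \<Rightarrow> bool" where
  "full_lattice24 L \<longleftrightarrow>
     (\<exists>f :: 24 \<Rightarrow> real^24. span (range f) = UNIV \<and>
        L = range (\<lambda>c :: 24 \<Rightarrow> int. \<Sum>i\<in>UNIV. of_int (c i) *\<^sub>R f i))"

definition even_unimodular24 :: "(real^24) set \<Rightarrow> bool" where
  "even_unimodular24 L \<longleftrightarrow> full_lattice24 L
     \<and> (\<forall>x. (\<forall>y\<in>L. x \<bullet> y \<in> \<int>) \<longleftrightarrow> x \<in> L)
     \<and> (\<forall>x\<in>L. \<exists>k::int. x \<bullet> x = 2 * of_int k)"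

definition lattice_roots :: "('a::real_inner) set \<Rightarrow> 'a set" where
  "lattice_roots L = {v\<in>L. v \<bullet> v = 2}"

definition root_system_A2_12 :: "(real^24) set \<Rightarrow> bool" where
  "root_system_A2_12 L \<longleftrightarrow>
     (\<exists>a b :: 12 \<Rightarrow> real^24.
        (\<forall>i. a i \<bullet> a i = 2 \<and> b i \<bullet> b i = 2 \<and> a i \<bullet> b i = -1) \<and>
        (\<forall>i j. i \<noteq> j \<longrightarrow> a i \<bullet> a j = 0 \<and> a i \<bullet> b j = 0 \<and> b i \<bullet> b j = 0) \<and>
        lattice_roots L = (\<Union>i. {a i, - a i, b i, - b i, a i + b i, - (a i + b i)}))"

definition niemeier_A2_12 :: "(real^24) set \<Rightarrow> bool" where
  "niemeier_A2_12 N \<longleftrightarrow> even_unimodular24 N \<and> root_system_A2_12 N"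

definition lattice_aut :: "(real^24) set \<Rightarrow> (real^24 \<Rightarrow> real^24) \<Rightarrow> bool" where
  "lattice_aut N \<Phi> \<longleftrightarrow> orthogonal_transformation \<Phi> \<and> \<Phi> ` N = N"

text \<open>A block of A_2^* inside the sum-zero hyperplane of real^3.\<close>
definition A2dual_block :: "real^3 \<Rightarrow> bool" where
  "A2dual_block y \<longleftrightarrow> y$0 + y$1 + y$2 = 0 \<and> (\<forall>i j. y$i - y$j \<in> \<int>)"

text \<open>Class of an A_2^* vector in A_2^*/A_2 = Z/3.\<close>
definition A2_glue :: "real^3 \<Rightarrow> 3" where
  "A2_glue y = of_int \<lfloor>3 * y$0\<rfloor>"

text \<open>P(-1): the A_2^9 lattice (blocks indexed by the 9 fixed points, identified with
  F_3^2 = 3 \<times> 3) glued along the ternary code of affine functions on F_3^2.\<close>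
definition P_lattice :: "(real^3^(3 \<times> 3)) set" where
  "P_lattice = {x. (\<forall>p. A2dual_block (x$p)) \<and>
     (\<exists>\<alpha> \<beta> \<gamma> :: 3. \<forall>a b. A2_glue (x$(a,b)) = \<alpha> * a + \<beta> * b + \<gamma>)}"

definition isometric_embedding ::
  "('a::real_inner \<Rightarrow> 'b::real_inner) \<Rightarrow> 'a set \<Rightarrow> 'b set \<Rightarrow> bool" where
  "isometric_embedding \<iota> M N \<longleftrightarrow> \<iota> ` M \<subseteq> N
     \<and> (\<forall>x\<in>M. \<forall>y\<in>M. \<iota> (x + y) = \<iota> x + \<iota> y)
     \<and> (\<forall>x\<in>M. \<forall>y\<in>M. \<iota> x \<bullet> \<iota> y = x \<bullet> y)"

definition primitive_embedding ::
  "('a::real_inner \<Rightarrow> 'b::real_inner) \<Rightarrow> 'a set \<Rightarrow> 'b set \<Rightarrow> bool" where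
  "primitive_embedding \<iota> M N \<longleftrightarrow> isometric_embedding \<iota> M N
     \<and> (\<forall>v\<in>N. \<forall>n::int. n \<noteq> 0 \<and> of_int n *\<^sub>R v \<in> \<iota> ` M \<longrightarrow> v \<in> \<iota> ` M)"

end

theory Submission
  imports Defs
begin

text \<open>Let \<open>R \<cong> A\<^sub>2\<^sup>1\<^sup>2\<close> be the root lattice of \<open>N\<close>, spanned by the roots \<open>a\<^sub>i, b\<^sub>i\<close>. A vector of
  the dual lattice \<open>R\<^sup>*\<close> has a glue class in \<open>A\<^sub>2\<^sup>*/A\<^sub>2 \<cong> F\<^sub>3\<close> on each of the twelve components,
  and \<open>N/R\<close> is the glue code: a self-dual ternary code of length 12 without nonzero words of
  weight \<open>\<le> 3\<close> (such a word would come from a root of \<open>N\<close> outside \<open>R\<close>).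

  A primitive embedding \<open>\<iota>\<close> of \<open>P(-1)\<close> maps the nine \<open>A\<^sub>2\<close> blocks of \<open>P(-1)\<close> onto nine distinct
  components, and primitivity says that the codewords supported on these components are exactly
  the glue words of \<open>\<iota>(P(-1))\<close>. So two embeddings \<open>\<iota>\<^sub>1, \<iota>\<^sub>2\<close> identify, up to signs, the codes
  obtained by shortening at the three remaining components. A Witt-type extension argument, which
  only uses self-duality and the weight bound, extends this to a signed permutation of all twelve
  coordinates preserving the code. The isometry carrying the root frame adapted to \<open>\<iota>\<^sub>1\<close> to the
  one adapted to \<open>\<iota>\<^sub>2\<close>, twisted by these signs on the remaining components, then preserves \<open>R\<^sup>*\<close>
  and the glue code, hence \<open>N\<close>, and it agrees with \<open>\<iota>\<^sub>2 \<circ> \<iota>\<^sub>1\<^sup>-\<^sup>1\<close> on \<open>\<iota>\<^sub>1(P(-1))\<close>.\<close>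

section \<open>Self-dual ternary codes\<close>

lemma F3_cases: "(x::3) = 0 \<or> x = 1 \<or> x = -1"
proof -
  have "x = 1 \<or> x = 2 \<or> x = 3" by (rule exhaust_3)
  moreover have "(2::3) = -1" "(3::3) = 0" by simp_all
  ultimately show ?thesis by auto
qed

lemma F3_square_nonzero: "(x::3) \<noteq> 0 \<Longrightarrow> x * x = 1"
  using F3_cases[of x] by auto

lemma F3_square_cases: "(x::3) * x = (if x = 0 then 0 else 1)"
  using F3_cases[of x] by auto

lemma F3_double: "(x::3) + x = - x"
  using F3_cases[of x] by auto

lemma of_int_F3_eq_0_iff: "(of_int k :: 3) = 0 \<longleftrightarrow> 3 dvd k"
  by (simp add: of_int_eq_0_iff_char_dvd)

text \<open>The representative of \<open>z\<close> in \<open>{-1, 0, 1}\<close>.\<close>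
definition F3_rep :: "3 \<Rightarrow> int" where
  "F3_rep z = (SOME k. of_int k = z \<and> k * k = (if z = 0 then 0 else 1))"

lemma F3_rep: "of_int (F3_rep z) = z \<and> F3_rep z * F3_rep z = (if z = 0 then 0 else 1)"
proof -
  have "\<exists>k::int. of_int k = z \<and> k * k = (if z = 0 then 0 else 1)"
    using F3_cases[of z] by (auto intro: exI[of _ 0] exI[of _ 1] exI[of _ "-1"])
  then show ?thesis unfolding F3_rep_def by (rule someI_ex)
qed

lemma F3_sum_squares:
  assumes "finite K"
  shows "(\<Sum>k\<in>K. f k * f k) = (of_nat (card {k\<in>K. f k \<noteq> 0}) :: 3)"
proof -
  have "(\<Sum>k\<in>K. f k * f k) = (\<Sum>k\<in>K. if f k = 0 then 0 else 1)"
    by (simp add: F3_square_cases)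
  also have "\<dots> = of_nat (card {k\<in>K. f k \<noteq> 0})"
    using assms by (simp add: sum.If_cases Int_def)
  finally show ?thesis .
qed

lemma F3_sum_squares_eq_1:
  assumes "card K \<le> 3" and "(\<Sum>k\<in>K. f k * f k) = (1::3)"
  shows "\<exists>k\<in>K. f k \<noteq> 0 \<and> (\<forall>k'\<in>K. k' \<noteq> k \<longrightarrow> f k' = 0)"
proof -
  have fin: "finite K"
    using assms(2) by (metis sum.infinite zero_neq_one)
  define A where "A = {k\<in>K. f k \<noteq> 0}"
  have "card A \<le> 3"
    using assms(1) fin card_mono[of K A] unfolding A_def by force
  moreover have "(of_nat (card A) :: 3) = 1"
    using assms(2) F3_sum_squares[OF fin, of f] unfolding A_def by simp
  ultimately have "card A = 1"
    by (cases "card A") (auto simp: numeral_eq_Suc le_Suc_eq)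
  then obtain k where "A = {k}" by (rule card_1_singletonE)
  then show ?thesis unfolding A_def by blast
qed

lemma F3_mult_nonzero: "(x::3) \<noteq> 0 \<Longrightarrow> y \<noteq> 0 \<Longrightarrow> x * y \<noteq> 0"
  using F3_cases[of x] F3_cases[of y] by auto

lemma F3_orthogonal_monomial:
  assumes card: "card T1 \<le> 3" "card T2 = card T1" "finite T2"
    and gram: "\<And>t s. t \<in> T1 \<Longrightarrow> s \<in> T1 \<Longrightarrow>
      (\<Sum>k\<in>T2. M t k * M s k) = (if t = s then 1 else (0::3))"
  shows "\<exists>\<tau>. bij_betw \<tau> T1 T2 \<and> (\<forall>t\<in>T1. M t (\<tau> t) \<noteq> 0 \<and> (\<forall>k\<in>T2. k \<noteq> \<tau> t \<longrightarrow> M t k = 0))"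
proof -
  have "\<forall>t\<in>T1. \<exists>k\<in>T2. M t k \<noteq> 0 \<and> (\<forall>k'\<in>T2. k' \<noteq> k \<longrightarrow> M t k' = 0)"
    using F3_sum_squares_eq_1[of T2] gram card by simp
  then obtain \<tau> where \<tau>: "\<And>t. t \<in> T1 \<Longrightarrow> \<tau> t \<in> T2 \<and> M t (\<tau> t) \<noteq> 0 \<and> (\<forall>k\<in>T2. k \<noteq> \<tau> t \<longrightarrow> M t k = 0)"
    by metis
  have "inj_on \<tau> T1"
  proof (rule inj_onI, rule ccontr)
    fix t s assume ts: "t \<in> T1" "s \<in> T1" "\<tau> t = \<tau> s" "t \<noteq> s"
    have "(\<Sum>k\<in>T2. M t k * M s k) = M t (\<tau> t) * M s (\<tau> t)"
      by (rule sum.remove[OF card(3) \<tau>[OF ts(1), THEN conjunct1], THEN trans])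
        (use \<tau>[OF ts(1)] in auto)
    then show False
      using gram[OF ts(1,2)] ts \<tau>[OF ts(1)] \<tau>[OF ts(2)] F3_mult_nonzero by auto
  qed
  moreover have "\<tau> ` T1 = T2"
    using card_image[OF \<open>inj_on \<tau> T1\<close>] card \<tau> by (intro card_subset_eq) auto
  ultimately show ?thesis using \<tau> unfolding bij_betw_def by blast
qed

lemma sum_UNIV_Compl:
  fixes f :: "'n::finite \<Rightarrow> 'a::comm_monoid_add"
  shows "(\<Sum>i\<in>UNIV. f i) = (\<Sum>i\<in>T. f i) + (\<Sum>i\<in>-T. f i)"
proof -
  have "(\<Sum>i\<in>UNIV. f i) = (\<Sum>i\<in>UNIV - T. f i) + (\<Sum>i\<in>T. f i)"
    by (rule sum.subset_diff) auto
  then show ?thesis by (simp only: Compl_eq_Diff_UNIV add.commute)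
qed

lemma sum_eq_single:
  assumes "finite A" "a \<in> A" "\<And>x. x \<in> A \<Longrightarrow> x \<noteq> a \<Longrightarrow> f x = 0"
  shows "sum f A = f a"
proof -
  have "sum f (A - {a}) = 0" using assms(3) by (intro sum.neutral) auto
  then show ?thesis using sum.remove[OF assms(1,2), of f] by simp
qed

lemma sum_UNIV_eq_Compl:
  fixes f :: "'n::finite \<Rightarrow> 'a::comm_monoid_add"
  shows "(\<And>i. i \<in> T \<Longrightarrow> f i = 0) \<Longrightarrow> (\<Sum>i\<in>UNIV. f i) = (\<Sum>i\<in>-T. f i)"
  using sum_UNIV_Compl[of f T] by simp

locale self_dual_ternary_code =
  fixes C :: "('n::finite \<Rightarrow> 3) set"
  assumes code_zero: "(\<lambda>i. 0) \<in> C"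
    and code_add: "c \<in> C \<Longrightarrow> d \<in> C \<Longrightarrow> (\<lambda>i. c i + d i) \<in> C"
    and code_self_orthogonal: "c \<in> C \<Longrightarrow> d \<in> C \<Longrightarrow> (\<Sum>i\<in>UNIV. c i * d i) = 0"
    and code_dual: "(\<And>c. c \<in> C \<Longrightarrow> (\<Sum>i\<in>UNIV. u i * c i) = 0) \<Longrightarrow> u \<in> C"
    and code_min_weight: "c \<in> C \<Longrightarrow> card {i. c i \<noteq> 0} \<le> 3 \<Longrightarrow> c = (\<lambda>i. 0)"
begin

lemma code_smult: "c \<in> C \<Longrightarrow> (\<lambda>i. k * c i) \<in> C"
  using code_add[of c c] code_zero F3_cases[of k] by (auto simp: F3_double)

lemma code_diff: "c \<in> C \<Longrightarrow> d \<in> C \<Longrightarrow> (\<lambda>i. c i - d i) \<in> C"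
  using code_add[of c "\<lambda>i. (-1) * d i"] code_smult[of d "-1"] by simp

lemma code_lincomb:
  "finite F \<Longrightarrow> (\<And>t. t \<in> F \<Longrightarrow> f t \<in> C) \<Longrightarrow> (\<lambda>i. \<Sum>t\<in>F. k t * f t i) \<in> C"
proof (induction F rule: finite_induct)
  case (insert x F)
  then show ?case using code_add[OF code_smult[of "f x" "k x"] insert.IH] by simp
qed (simp add: code_zero)

lemma code_supported_le_3:
  assumes "c \<in> C" "\<And>i. i \<notin> T \<Longrightarrow> c i = 0" "card T \<le> 3"
  shows "c = (\<lambda>i. 0)"
proof -
  have "card {i. c i \<noteq> 0} \<le> card T"
    using assms(2) by (intro card_mono) auto
  then show ?thesis using code_min_weight assms(1,3) by simp
qed

definition unit_words :: "'n set \<Rightarrow> ('n \<Rightarrow> 'n \<Rightarrow> 3) \<Rightarrow> bool" where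
  "unit_words T d \<longleftrightarrow> (\<forall>k\<in>T. d k \<in> C \<and> d k k = 1 \<and> (\<forall>s\<in>T. s \<noteq> k \<longrightarrow> d k s = 0))"

lemma unit_words_clear:
  assumes d: "unit_words T d" and c: "c \<in> C"
  shows "(\<lambda>i. c i - (\<Sum>k\<in>T. c k * d k i)) \<in> C"
    and "i \<in> T \<Longrightarrow> c i - (\<Sum>k\<in>T. c k * d k i) = 0"
proof -
  show "(\<lambda>i. c i - (\<Sum>k\<in>T. c k * d k i)) \<in> C"
    using code_diff[OF c code_lincomb[of T d c]] d unfolding unit_words_def by simp
  assume i: "i \<in> T"
  have "(\<Sum>k\<in>T - {i}. c k * d k i) = 0"
    by (rule sum.neutral) (use d i in \<open>fastforce simp: unit_words_def\<close>)
  then show "c i - (\<Sum>k\<in>T. c k * d k i) = 0"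
    using d i by (simp add: sum.remove[of T i] unit_words_def)
qed

text \<open>Otherwise the coordinate \<open>x\<close> would be a linear combination of the coordinates in \<open>F\<close>
  on \<open>C\<close>; the relation is a word of the dual code, hence of \<open>C\<close>, supported in \<open>insert x F\<close>.\<close>
lemma unit_word_new_coordinate:
  assumes d: "unit_words F d" and x: "x \<notin> F"
    and supp: "\<And>c. c \<in> C \<Longrightarrow> (\<And>i. i \<notin> insert x F \<Longrightarrow> c i = 0) \<Longrightarrow> c = (\<lambda>i. 0)"
  shows "\<exists>e\<in>C. e x = 1 \<and> (\<forall>r\<in>F. e r = 0)"
proof -
  have "\<exists>e\<in>C. e x \<noteq> 0 \<and> (\<forall>r\<in>F. e r = 0)"
  proof (rule ccontr)
    assume none: "\<not> ?thesis"
    define u where "u i = (if i \<in> F then d i x else 0) - (if i = x then 1 else 0)" for i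
    have "u \<in> C"
    proof (rule code_dual)
      fix c assume c: "c \<in> C"
      have "c x - (\<Sum>s\<in>F. c s * d s x) = 0"
        using none unit_words_clear[OF d c] by force
      moreover have "u i * c i = (if i \<in> F then c i * d i x else 0) - (if i = x then c i else 0)" for i
        unfolding u_def by (simp add: algebra_simps)
      ultimately show "(\<Sum>i\<in>UNIV. u i * c i) = 0"
        by (simp only: sum_subtractf sum.inter_restrict[OF finite, symmetric] Int_UNIV_left sum.delta)
          simp
    qed
    then have "u = (\<lambda>i. 0)"
      by (rule supp) (simp add: u_def)
    moreover have "u x = -1" using x by (simp add: u_def)
    ultimately show False by simp
  qed
  then obtain e where e: "e \<in> C" "e x \<noteq> 0" "\<forall>r\<in>F. e r = 0"
    by blast
  then have "(\<lambda>i. e x * e i) \<in> C" "e x * e x = 1"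
    using code_smult F3_square_nonzero by blast+
  then show ?thesis using e(3) by auto
qed

lemma unit_words_insert:
  assumes d: "unit_words F d" and x: "x \<notin> F" and e: "e \<in> C" "e x = 1" "\<forall>r\<in>F. e r = 0"
  shows "unit_words (insert x F) (\<lambda>t. if t = x then e else (\<lambda>i. d t i - d t x * e i))"
  unfolding unit_words_def
proof
  fix t assume t: "t \<in> insert x F"
  show "(if t = x then e else (\<lambda>i. d t i - d t x * e i)) \<in> C \<and>
    (if t = x then e else (\<lambda>i. d t i - d t x * e i)) t = 1 \<and>
    (\<forall>s\<in>insert x F. s \<noteq> t \<longrightarrow> (if t = x then e else (\<lambda>i. d t i - d t x * e i)) s = 0)"
  proof (cases "t = x")
    case True
    then show ?thesis using e by simp
  next
    case False
    then have "t \<in> F" using t by simp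
    then show ?thesis
      using False e d code_diff[OF _ code_smult[OF e(1)]] x by (auto simp: unit_words_def)
  qed
qed

lemma unit_words_exist:
  assumes supp: "\<And>c. c \<in> C \<Longrightarrow> (\<And>i. i \<notin> T \<Longrightarrow> c i = 0) \<Longrightarrow> c = (\<lambda>i. 0)"
  shows "\<exists>d. unit_words T d"
proof -
  have "\<exists>d. unit_words F d" if "F \<subseteq> T" for F
    using finite[of F] that
  proof (induction F rule: finite_induct)
    case empty
    then show ?case by (simp add: unit_words_def)
  next
    case (insert x F)
    then obtain d where d: "unit_words F d" by blast
    moreover obtain e where "e \<in> C" "e x = 1" "\<forall>r\<in>F. e r = 0"
      using unit_word_new_coordinate[OF d insert.hyps(2)] supp insert.prems by blast
    ultimately show ?case using unit_words_insert insert.hyps(2) by blast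
  qed
  then show ?thesis by blast
qed

lemma unit_words_exist_le_3: "card T \<le> 3 \<Longrightarrow> \<exists>d. unit_words T d"
  using unit_words_exist code_supported_le_3 by blast

lemma shortened_orthogonal_extends:
  assumes T: "card T \<le> 3"
    and w: "\<And>c. c \<in> C \<Longrightarrow> (\<forall>i\<in>T. c i = 0) \<Longrightarrow> (\<Sum>i\<in>UNIV. w i * c i) = 0"
  shows "\<exists>c\<in>C. \<forall>i. i \<notin> T \<longrightarrow> c i = w i"
proof -
  obtain d where d: "unit_words T d" using unit_words_exist_le_3[OF T] by blast
  define c' where "c' i = (if i \<in> T then - (\<Sum>j\<in>-T. w j * d i j) else w i)" for i
  have "c' \<in> C"
  proof (rule code_dual)
    fix c assume c: "c \<in> C"
    define r where "r i = c i - (\<Sum>k\<in>T. c k * d k i)" for i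
    have "(\<Sum>i\<in>UNIV. w i * r i) = 0"
      using w unit_words_clear[OF d c] unfolding r_def by blast
    moreover have "(\<Sum>i\<in>T. w i * r i) = 0"
      using unit_words_clear(2)[OF d c] unfolding r_def by simp
    ultimately have "(\<Sum>i\<in>-T. w i * r i) = 0"
      using sum_UNIV_Compl[of "\<lambda>i. w i * r i" T] by simp
    then have off: "(\<Sum>i\<in>-T. w i * c i) = (\<Sum>k\<in>T. c k * (\<Sum>j\<in>-T. w j * d k j))"
      unfolding r_def
      by (simp add: right_diff_distrib sum_subtractf sum_distrib_left sum.swap[of _ T]
          mult.left_commute)
    have "(\<Sum>i\<in>UNIV. c' i * c i) = (\<Sum>i\<in>T. c' i * c i) + (\<Sum>i\<in>-T. c' i * c i)"
      by (rule sum_UNIV_Compl)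
    also have "\<dots> = - (\<Sum>k\<in>T. c k * (\<Sum>j\<in>-T. w j * d k j)) + (\<Sum>i\<in>-T. w i * c i)"
      by (simp add: c'_def sum_negf mult.commute)
    finally show "(\<Sum>i\<in>UNIV. c' i * c i) = 0" using off by simp
  qed
  then show ?thesis by (intro bexI[of _ c']) (simp_all add: c'_def)
qed

lemma unit_words_sum: "unit_words T d \<Longrightarrow> t \<in> T \<Longrightarrow> (\<Sum>r\<in>T. d t r * f r) = f t"
  by (subst sum_eq_single[OF finite, of t]) (auto simp: unit_words_def)

context
  fixes T1 T2 :: "'n set" and \<rho> :: "'n \<Rightarrow> 'n" and \<delta> :: "'n \<Rightarrow> 3"
  assumes card_T: "card T1 \<le> 3" "card T2 = card T1"
    and \<rho>: "bij_betw \<rho> (-T1) (-T2)"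
    and \<delta>: "\<And>j. j \<notin> T1 \<Longrightarrow> \<delta> j * \<delta> j = 1"
    and shortened_12: "\<And>c. c \<in> C \<Longrightarrow> \<forall>t\<in>T1. c t = 0 \<Longrightarrow>
       \<exists>c'\<in>C. (\<forall>t\<in>T2. c' t = 0) \<and> (\<forall>j\<in>-T1. c' (\<rho> j) = \<delta> j * c j)"
    and shortened_21: "\<And>c'. c' \<in> C \<Longrightarrow> \<forall>t\<in>T2. c' t = 0 \<Longrightarrow>
       \<exists>c\<in>C. (\<forall>t\<in>T1. c t = 0) \<and> (\<forall>j\<in>-T1. c' (\<rho> j) = \<delta> j * c j)"
begin

definition transport :: "('n \<Rightarrow> 3) \<Rightarrow> 'n \<Rightarrow> 3" where
  "transport c k = (if k \<in> T2 then 0 else \<delta> (inv_into (-T1) \<rho> k) * c (inv_into (-T1) \<rho> k))"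

lemma \<rho>_notin: "j \<notin> T1 \<Longrightarrow> \<rho> j \<notin> T2"
  using \<rho> unfolding bij_betw_def by auto

lemma transport_apply: "j \<notin> T1 \<Longrightarrow> transport c (\<rho> j) = \<delta> j * c j"
  using \<rho>_notin bij_betw_inv_into_left[OF \<rho>, of j] unfolding transport_def by simp

lemma sum_Compl_reindex: "(\<Sum>k\<in>-T2. f k) = (\<Sum>j\<in>-T1. f (\<rho> j))"
  by (rule sum.reindex_bij_betw[OF \<rho>, symmetric])

lemma transport_orthogonal:
  assumes "u \<in> C" "c' \<in> C" "\<forall>t\<in>T2. c' t = 0"
  shows "(\<Sum>k\<in>UNIV. transport u k * c' k) = 0"
proof -
  obtain c where c: "c \<in> C" "\<forall>t\<in>T1. c t = 0" "\<forall>j\<in>-T1. c' (\<rho> j) = \<delta> j * c j"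
    using shortened_21 assms(2,3) by blast
  have "(\<Sum>k\<in>UNIV. transport u k * c' k) = (\<Sum>k\<in>-T2. transport u k * c' k)"
    using assms(3) by (intro sum_UNIV_eq_Compl) simp
  also have "\<dots> = (\<Sum>j\<in>-T1. (\<delta> j * \<delta> j) * (u j * c j))"
    unfolding sum_Compl_reindex using c(3) by (intro sum.cong) (auto simp: transport_apply mult_ac)
  also have "\<dots> = (\<Sum>j\<in>-T1. u j * c j)"
    using \<delta> by (intro sum.cong) simp_all
  also have "\<dots> = (\<Sum>j\<in>UNIV. u j * c j)"
    using c(2) by (intro sum_UNIV_eq_Compl[symmetric]) simp
  also have "\<dots> = 0" using code_self_orthogonal assms(1) c(1) by blast
  finally show ?thesis .
qed

lemma transport_lift: "u \<in> C \<Longrightarrow> \<exists>v\<in>C. \<forall>k. k \<notin> T2 \<longrightarrow> v k = transport u k"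
  using shortened_orthogonal_extends[of T2 "transport u"] transport_orthogonal card_T by simp

lemma transport_lift_dot:
  assumes "u \<in> C" "u' \<in> C" "v \<in> C" "v' \<in> C"
    and "\<forall>k. k \<notin> T2 \<longrightarrow> v k = transport u k" "\<forall>k. k \<notin> T2 \<longrightarrow> v' k = transport u' k"
  shows "(\<Sum>k\<in>T2. v k * v' k) = (\<Sum>t\<in>T1. u t * u' t)"
proof -
  have "(\<Sum>k\<in>-T2. v k * v' k) = (\<Sum>j\<in>-T1. (\<delta> j * \<delta> j) * (u j * u' j))"
    unfolding sum_Compl_reindex using assms(5,6) \<rho>_notin
    by (intro sum.cong) (auto simp: transport_apply mult_ac)
  also have "\<dots> = (\<Sum>j\<in>-T1. u j * u' j)"
    using \<delta> by (intro sum.cong) simp_all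
  finally have "(\<Sum>k\<in>-T2. v k * v' k) = (\<Sum>j\<in>-T1. u j * u' j)" .
  moreover have "(\<Sum>k\<in>T2. v k * v' k) + (\<Sum>k\<in>-T2. v k * v' k) = 0"
    using code_self_orthogonal[OF assms(3,4)] sum_UNIV_Compl[of "\<lambda>k. v k * v' k" T2] by simp
  moreover have "(\<Sum>t\<in>T1. u t * u' t) + (\<Sum>j\<in>-T1. u j * u' j) = 0"
    using code_self_orthogonal[OF assms(1,2)] sum_UNIV_Compl[of "\<lambda>k. u k * u' k" T1] by simp
  ultimately show ?thesis by (simp only: eq_neg_iff_add_eq_0[symmetric])
qed

text \<open>The lifts of the transported unit words are orthonormal on \<open>T2\<close>, so over \<open>F\<^sub>3\<close> their
  restrictions to \<open>T2\<close> form a monomial matrix.\<close>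
lemma unit_words_lifts_monomial:
  assumes u: "unit_words T1 u"
  shows "\<exists>v \<tau>. (\<forall>t\<in>T1. v t \<in> C \<and> (\<forall>k. k \<notin> T2 \<longrightarrow> v t k = transport (u t) k)) \<and>
    bij_betw \<tau> T1 T2 \<and> (\<forall>t\<in>T1. v t (\<tau> t) \<noteq> 0 \<and> (\<forall>k\<in>T2. k \<noteq> \<tau> t \<longrightarrow> v t k = 0))"
proof -
  have uC: "t \<in> T1 \<Longrightarrow> u t \<in> C" for t
    using u by (simp add: unit_words_def)
  have "\<forall>t\<in>T1. \<exists>v. v \<in> C \<and> (\<forall>k. k \<notin> T2 \<longrightarrow> v k = transport (u t) k)"
    using transport_lift uC by blast
  then obtain v where v: "\<forall>t\<in>T1. v t \<in> C \<and> (\<forall>k. k \<notin> T2 \<longrightarrow> v t k = transport (u t) k)"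
    by (rule bchoice[THEN exE])
  have "(\<Sum>k\<in>T2. v t k * v s k) = (if t = s then 1 else 0)" if "t \<in> T1" "s \<in> T1" for t s
  proof -
    have "(\<Sum>k\<in>T2. v t k * v s k) = (\<Sum>r\<in>T1. u t r * u s r)"
      by (rule transport_lift_dot) (use uC v that in auto)
    also have "\<dots> = u s t" using unit_words_sum[OF u that(1)] .
    finally show ?thesis using u that unfolding unit_words_def by auto
  qed
  then have "\<exists>\<tau>. bij_betw \<tau> T1 T2 \<and> (\<forall>t\<in>T1. v t (\<tau> t) \<noteq> 0 \<and> (\<forall>k\<in>T2. k \<noteq> \<tau> t \<longrightarrow> v t k = 0))"
    using card_T by (intro F3_orthogonal_monomial) simp_all
  then show ?thesis using v by blast
qed

lemma extend_word:
  assumes u: "unit_words T1 u"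
    and v: "\<forall>t\<in>T1. v t \<in> C \<and> (\<forall>k. k \<notin> T2 \<longrightarrow> v t k = transport (u t) k)"
    and \<tau>: "bij_betw \<tau> T1 T2" and v\<tau>: "\<forall>t\<in>T1. \<forall>k\<in>T2. k \<noteq> \<tau> t \<longrightarrow> v t k = 0"
    and c: "c \<in> C"
  shows "\<exists>c'\<in>C. (\<forall>j\<in>-T1. c' (\<rho> j) = \<delta> j * c j) \<and> (\<forall>t\<in>T1. c' (\<tau> t) = v t (\<tau> t) * c t)"
proof -
  define c0 where "c0 i = c i - (\<Sum>t\<in>T1. c t * u t i)" for i
  obtain c0' where c0': "c0' \<in> C" "\<forall>k\<in>T2. c0' k = 0" "\<forall>j\<in>-T1. c0' (\<rho> j) = \<delta> j * c0 j"
    using shortened_12[of c0] unit_words_clear[OF u c] unfolding c0_def by blast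
  define c' where "c' i = c0' i + (\<Sum>t\<in>T1. c t * v t i)" for i
  have "(\<lambda>i. \<Sum>t\<in>T1. c t * v t i) \<in> C"
    by (rule code_lincomb) (simp_all add: v)
  then have "c' \<in> C"
    unfolding c'_def[abs_def] using code_add[OF c0'(1)] by simp
  moreover have "c' (\<rho> j) = \<delta> j * c j" if "j \<notin> T1" for j
  proof -
    have "c' (\<rho> j) = \<delta> j * c0 j + (\<Sum>t\<in>T1. c t * (\<delta> j * u t j))"
      unfolding c'_def using c0'(3) v \<rho>_notin that by (simp add: transport_apply)
    then show ?thesis
      unfolding c0_def by (simp add: algebra_simps sum_distrib_left)
  qed
  moreover have "c' (\<tau> t) = v t (\<tau> t) * c t" if t: "t \<in> T1" for t
  proof -
    have \<tau>t: "\<tau> t \<in> T2" using \<tau> t bij_betwE by blast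
    have "v s (\<tau> t) = 0" if "s \<in> T1" "s \<noteq> t" for s
    proof -
      have "\<tau> t \<noteq> \<tau> s" using \<tau> that t unfolding bij_betw_def by (metis inj_onD)
      then show ?thesis using v\<tau> that(1) \<tau>t by blast
    qed
    then have "(\<Sum>s\<in>T1. c s * v s (\<tau> t)) = c t * v t (\<tau> t)"
      by (intro sum_eq_single[OF finite t]) simp
    then show ?thesis
      unfolding c'_def using c0'(2) \<tau>t by (simp add: mult.commute)
  qed
  ultimately show ?thesis by auto
qed

text \<open>Witt-type extension: a sign-twisted bijection between the complements of \<open>T1\<close> and \<open>T2\<close>
  that identifies the two shortened codes extends to a monomial automorphism of \<open>C\<close>.\<close>
theorem code_extend:
  "\<exists>\<tau> \<epsilon>. bij_betw \<tau> T1 T2 \<and> (\<forall>t\<in>T1. \<epsilon> t * \<epsilon> t = 1) \<and>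
     (\<forall>c\<in>C. \<exists>c'\<in>C. (\<forall>j\<in>-T1. c' (\<rho> j) = \<delta> j * c j) \<and> (\<forall>t\<in>T1. c' (\<tau> t) = \<epsilon> t * c t))"
proof -
  obtain u where u: "unit_words T1 u"
    using unit_words_exist_le_3 card_T(1) by blast
  then obtain v \<tau> where v: "\<forall>t\<in>T1. v t \<in> C \<and> (\<forall>k. k \<notin> T2 \<longrightarrow> v t k = transport (u t) k)"
    and \<tau>: "bij_betw \<tau> T1 T2" and v\<tau>: "\<forall>t\<in>T1. v t (\<tau> t) \<noteq> 0 \<and> (\<forall>k\<in>T2. k \<noteq> \<tau> t \<longrightarrow> v t k = 0)"
    using unit_words_lifts_monomial by blast
  have "\<forall>t\<in>T1. v t (\<tau> t) * v t (\<tau> t) = 1"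
    using v\<tau> F3_square_nonzero by blast
  moreover have "\<forall>c\<in>C. \<exists>c'\<in>C. (\<forall>j\<in>-T1. c' (\<rho> j) = \<delta> j * c j) \<and> (\<forall>t\<in>T1. c' (\<tau> t) = v t (\<tau> t) * c t)"
    using extend_word[OF u v \<tau>] v\<tau> by blast
  ultimately show ?thesis
    using \<tau> by (intro exI[of _ \<tau>] exI[of _ "\<lambda>t. v t (\<tau> t)"]) simp
qed

end

end

section \<open>The Niemeier lattice of type \<open>A\<^sub>2\<^sup>1\<^sup>2\<close>\<close>

definition A2_root_coeffs :: "(int \<times> int) set" where
  "A2_root_coeffs = {(1,0), (-1,0), (0,1), (0,-1), (1,1), (-1,-1)}"

lemma A2_root_coeffs_norm: "(u, w) \<in> A2_root_coeffs \<Longrightarrow> 2*u*u - u*w - w*u + 2*w*w = 2"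
  unfolding A2_root_coeffs_def by auto

lemma A2_root_coeffs_inner_nonzero:
  "(u, w) \<in> A2_root_coeffs \<Longrightarrow> (u', w') \<in> A2_root_coeffs \<Longrightarrow> 2*u*u' - u*w' - w*u' + 2*w*w' \<noteq> 0"
  unfolding A2_root_coeffs_def by auto

text \<open>Two roots of \<open>A\<^sub>2\<close> with inner product \<open>-1\<close> form a base: the change of basis from
  \<open>(a, b)\<close> is unimodular, and it preserves the glue class up to the sign \<open>u1 - u2\<close>.\<close>
lemma A2_root_coeffs_base:
  assumes "(u1, w1) \<in> A2_root_coeffs" "(u2, w2) \<in> A2_root_coeffs"
    and "2*u1*u2 - u1*w2 - w1*u2 + 2*w1*w2 = -1"
  shows "(u1*w2 - w1*u2) * (u1*w2 - w1*u2) = 1" "3 dvd (u1 - u2 + w1 - w2)" "\<not> 3 dvd (u1 - u2)"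
  using assms unfolding A2_root_coeffs_def dvd_eq_mod_eq_0 by auto

lemma of_int_floor_Ints: "x \<in> \<int> \<Longrightarrow> of_int \<lfloor>x\<rfloor> = x"
  by (metis Ints_cases floor_of_int)

locale A2_12_lattice =
  fixes N :: "(real^24) set" and a b :: "12 \<Rightarrow> real^24"
  assumes unimodular: "\<And>x. (\<forall>y\<in>N. x \<bullet> y \<in> \<int>) \<longleftrightarrow> x \<in> N"
    and even: "\<And>x. x \<in> N \<Longrightarrow> \<exists>k::int. x \<bullet> x = 2 * of_int k"
    and inner_a_self: "\<And>i. a i \<bullet> a i = 2" and inner_b_self: "\<And>i. b i \<bullet> b i = 2"
    and inner_a_b_self: "\<And>i. a i \<bullet> b i = -1"
    and inner_other: "\<And>i j. i \<noteq> j \<Longrightarrow> a i \<bullet> a j = 0 \<and> a i \<bullet> b j = 0 \<and> b i \<bullet> b j = 0"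
    and roots: "lattice_roots N = (\<Union>i. {a i, - a i, b i, - b i, a i + b i, - (a i + b i)})"
begin

lemma inner_a_a: "a i \<bullet> a j = (if i = j then 2 else 0)"
  using inner_a_self inner_other by auto
lemma inner_a_b: "a i \<bullet> b j = (if i = j then -1 else 0)"
  using inner_a_b_self inner_other by auto
lemma inner_b_a: "b i \<bullet> a j = (if i = j then -1 else 0)"
  using inner_a_b_self inner_other by (auto simp: inner_commute)
lemma inner_b_b: "b i \<bullet> b j = (if i = j then 2 else 0)"
  using inner_b_self inner_other by auto
lemmas inner_ab = inner_a_a inner_a_b inner_b_a inner_b_b

lemma lattice_inner_Ints: "x \<in> N \<Longrightarrow> y \<in> N \<Longrightarrow> x \<bullet> y \<in> \<int>"
  using unimodular by blast

lemma lattice_add: "x \<in> N \<Longrightarrow> y \<in> N \<Longrightarrow> x + y \<in> N"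
  using unimodular[of "x + y"] unimodular[of x] unimodular[of y] by (auto simp: inner_add_left)

lemma lattice_scaleR_int: "x \<in> N \<Longrightarrow> of_int k *\<^sub>R x \<in> N"
  using unimodular[of x] unimodular[of "of_int k *\<^sub>R x"] by (auto simp: inner_scaleR_left)

lemma lattice_zero: "0 \<in> N"
  using unimodular[of 0] by simp

lemma lattice_diff: "x \<in> N \<Longrightarrow> y \<in> N \<Longrightarrow> x - y \<in> N"
  using lattice_add[of x "-y"] lattice_scaleR_int[of y "-1"] by simp

lemma lattice_sum: "(\<And>t. t \<in> F \<Longrightarrow> f t \<in> N) \<Longrightarrow> (\<Sum>t\<in>F. f t) \<in> N"
  by (induction F rule: infinite_finite_induct) (auto intro: lattice_add lattice_zero)

lemma a_in_lattice: "a i \<in> N" and b_in_lattice: "b i \<in> N"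
  using roots unfolding lattice_roots_def by blast+

definition comp_vec :: "12 \<Rightarrow> int \<Rightarrow> int \<Rightarrow> real^24" where
  "comp_vec i u w = of_int u *\<^sub>R a i + of_int w *\<^sub>R b i"

lemma inner_comp_vec:
  "comp_vec i u w \<bullet> comp_vec j u' w' = (if i = j then of_int (2*u*u' - u*w' - w*u' + 2*w*w') else 0)"
  unfolding comp_vec_def by (simp add: inner_add_left inner_add_right inner_ab algebra_simps)

lemma inner_comp_vec_a: "comp_vec i u w \<bullet> a j = (if i = j then of_int (2*u - w) else 0)"
  unfolding comp_vec_def by (simp add: inner_add_left inner_ab algebra_simps)

lemma inner_comp_vec_b: "comp_vec i u w \<bullet> b j = (if i = j then of_int (2*w - u) else 0)"
  unfolding comp_vec_def by (simp add: inner_add_left inner_ab algebra_simps)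

lemma comp_vec_in_lattice: "comp_vec i u w \<in> N"
  unfolding comp_vec_def using lattice_add lattice_scaleR_int a_in_lattice b_in_lattice by blast

lemma root_is_comp_vec:
  assumes "x \<in> lattice_roots N"
  shows "\<exists>i u w. (u, w) \<in> A2_root_coeffs \<and> x = comp_vec i u w"
proof -
  obtain i where "x \<in> {a i, - a i, b i, - b i, a i + b i, - (a i + b i)}"
    using assms roots by auto
  then consider "x = comp_vec i 1 0" | "x = comp_vec i (-1) 0" | "x = comp_vec i 0 1"
    | "x = comp_vec i 0 (-1)" | "x = comp_vec i 1 1" | "x = comp_vec i (-1) (-1)"
    unfolding comp_vec_def by (auto simp: scaleR_add_right[symmetric])
  then show ?thesis unfolding A2_root_coeffs_def by cases blast+
qed

lemma orthogonal_to_roots_eq_0: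
  assumes z: "\<And>i. z \<bullet> a i = 0 \<and> z \<bullet> b i = 0"
  shows "z = 0"
proof -
  define B where "B = range a \<union> range b"
  have inj_a: "inj a" and inj_b: "inj b"
    unfolding inj_on_def using inner_a_a inner_b_b by (metis zero_neq_numeral)+
  have "a i \<noteq> b j" for i j
    using inner_a_a[of i i] inner_b_a[of j i] by (cases "i = j") auto
  then have disj: "range a \<inter> range b = {}" by blast
  have card_B: "card B = 24"
    unfolding B_def using card_Un_disjoint[OF _ _ disj] card_image[OF inj_a] card_image[OF inj_b]
    by simp
  have "independent B"
  proof (rule independent_if_scalars_zero)
    show "finite B" unfolding B_def by simp
    fix f x assume s: "(\<Sum>x\<in>B. f x *\<^sub>R x) = 0" and x: "x \<in> B"
    define v where "v = (\<Sum>i\<in>UNIV. f (a i) *\<^sub>R a i) + (\<Sum>i\<in>UNIV. f (b i) *\<^sub>R b i)"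
    have "(\<Sum>x\<in>B. f x *\<^sub>R x) = (\<Sum>x\<in>range a. f x *\<^sub>R x) + (\<Sum>x\<in>range b. f x *\<^sub>R x)"
      unfolding B_def by (rule sum.union_disjoint) (use disj in auto)
    then have v0: "v = 0"
      using s unfolding v_def by (simp add: sum.reindex[OF inj_a] sum.reindex[OF inj_b])
    have "f (a j) = 0 \<and> f (b j) = 0" for j
    proof -
      have "v \<bullet> a j = 2 * f (a j) - f (b j)" "v \<bullet> b j = 2 * f (b j) - f (a j)"
        unfolding v_def
          by (simp_all add: inner_add_left inner_sum_left inner_ab if_distrib cong: if_cong)
      then show ?thesis using v0 by simp
    qed
    then show "f x = 0" using x unfolding B_def by auto
  qed
  then have "UNIV \<subseteq> span B"
    using card_B by (intro card_ge_dim_independent) (auto simp: dim_UNIV)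
  then have "orthogonal z z"
    by (intro orthogonal_to_span[of z B z]) (auto simp: orthogonal_def B_def z)
  then show "z = 0" by (simp add: orthogonal_def)
qed

definition A2_base :: "12 \<Rightarrow> real^24 \<Rightarrow> real^24 \<Rightarrow> bool" where
  "A2_base i x y \<longleftrightarrow> (\<exists>u1 w1 u2 w2. (u1, w1) \<in> A2_root_coeffs \<and> (u2, w2) \<in> A2_root_coeffs \<and>
     2*u1*u2 - u1*w2 - w1*u2 + 2*w1*w2 = -1 \<and> x = comp_vec i u1 w1 \<and> y = comp_vec i u2 w2)"

lemma A2_baseE:
  assumes "A2_base i x y"
  obtains u1 w1 u2 w2 where "(u1, w1) \<in> A2_root_coeffs" "(u2, w2) \<in> A2_root_coeffs"
    "2*u1*u2 - u1*w2 - w1*u2 + 2*w1*w2 = -1" "x = comp_vec i u1 w1" "y = comp_vec i u2 w2"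
    "(u1*w2 - w1*u2) * (u1*w2 - w1*u2) = 1" "3 dvd (u1 - u2 + w1 - w2)" "\<not> 3 dvd (u1 - u2)"
  using assms A2_root_coeffs_base unfolding A2_base_def by metis

lemma A2_base_ab: "A2_base i (a i) (b i)"
  unfolding A2_base_def A2_root_coeffs_def comp_vec_def
  by (intro exI[of _ 1] exI[of _ 0] exI[of _ 0] exI[of _ 1]) simp

lemma A2_base_neg_ab: "A2_base i (- a i) (- b i)"
  unfolding A2_base_def A2_root_coeffs_def comp_vec_def
  by (intro exI[of _ "-1"] exI[of _ 0] exI[of _ 0] exI[of _ "-1"]) simp

lemma A2_base_inner: "A2_base i x y \<Longrightarrow> x \<bullet> x = 2 \<and> y \<bullet> y = 2 \<and> x \<bullet> y = -1 \<and> y \<bullet> x = -1"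
proof (elim A2_baseE)
  fix u1 w1 u2 w2
  assume r: "(u1, w1) \<in> A2_root_coeffs" "(u2, w2) \<in> A2_root_coeffs"
    and p: "2*u1*u2 - u1*w2 - w1*u2 + 2*w1*w2 = -1"
    and x: "x = comp_vec i u1 w1" and y: "y = comp_vec i u2 w2"
  have "x \<bullet> x = of_int (2*u1*u1 - u1*w1 - w1*u1 + 2*w1*w1)"
    "y \<bullet> y = of_int (2*u2*u2 - u2*w2 - w2*u2 + 2*w2*w2)"
    "x \<bullet> y = of_int (2*u1*u2 - u1*w2 - w1*u2 + 2*w1*w2)"
    unfolding x y by (simp_all only: inner_comp_vec if_P[OF refl])
  then have "x \<bullet> x = 2" "y \<bullet> y = 2" "x \<bullet> y = -1"
    by (simp_all only: A2_root_coeffs_norm[OF r(1)] A2_root_coeffs_norm[OF r(2)] p)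
  then show ?thesis by (simp add: inner_commute)
qed

lemma A2_base_orthogonal:
  "A2_base i x y \<Longrightarrow> A2_base j x' y' \<Longrightarrow> i \<noteq> j \<Longrightarrow>
     x \<bullet> x' = 0 \<and> x \<bullet> y' = 0 \<and> y \<bullet> x' = 0 \<and> y \<bullet> y' = 0"
  by (elim A2_baseE) (simp add: inner_comp_vec)

lemma A2_base_orthogonal_ab:
  "A2_base i x y \<Longrightarrow> j \<noteq> i \<Longrightarrow> x \<bullet> a j = 0 \<and> x \<bullet> b j = 0 \<and> y \<bullet> a j = 0 \<and> y \<bullet> b j = 0"
  by (elim A2_baseE) (simp add: inner_comp_vec_a inner_comp_vec_b)

lemma A2_base_spans_ab:
  assumes "A2_base i x y"
  shows "\<exists>p q r s :: int. \<forall>z. z \<bullet> a i = of_int p * (z \<bullet> x) + of_int q * (z \<bullet> y)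
    \<and> z \<bullet> b i = of_int r * (z \<bullet> x) + of_int s * (z \<bullet> y)"
proof -
  obtain u1 w1 u2 w2 where x: "x = comp_vec i u1 w1" and y: "y = comp_vec i u2 w2"
    and D: "(u1*w2 - w1*u2) * (u1*w2 - w1*u2) = 1"
    using assms by (elim A2_baseE)
  define D where "D = u1*w2 - w1*u2"
  have DD: "real_of_int D * real_of_int D = 1"
    using D unfolding D_def by (metis of_int_1 of_int_mult)
  have "z \<bullet> a i = of_int (D*w2) * (z \<bullet> x) + of_int (- D*w1) * (z \<bullet> y)
      \<and> z \<bullet> b i = of_int (- D*u2) * (z \<bullet> x) + of_int (D*u1) * (z \<bullet> y)" for z
  proof -
    have "of_int (D*w2) * (z \<bullet> x) + of_int (- D*w1) * (z \<bullet> y) = (of_int D * of_int D) * (z \<bullet> a i)"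
      "of_int (- D*u2) * (z \<bullet> x) + of_int (D*u1) * (z \<bullet> y) = (of_int D * of_int D) * (z \<bullet> b i)"
      unfolding x y comp_vec_def D_def by (simp_all add: inner_add_right algebra_simps)
    then show ?thesis using DD by simp
  qed
  then show ?thesis by blast
qed

lemma A2_base_perp: "A2_base i x y \<Longrightarrow> z \<bullet> x = 0 \<Longrightarrow> z \<bullet> y = 0 \<Longrightarrow> z \<bullet> a i = 0 \<and> z \<bullet> b i = 0"
  using A2_base_spans_ab by fastforce

definition root_dual :: "real^24 \<Rightarrow> bool" where
  "root_dual v \<longleftrightarrow> (\<forall>i. v \<bullet> a i \<in> \<int> \<and> v \<bullet> b i \<in> \<int>)"

text \<open>The class of \<open>v\<close> in \<open>A\<^sub>2\<^sup>*/A\<^sub>2 \<cong> F\<^sub>3\<close> on the \<open>i\<close>-th component.\<close>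
definition glue :: "12 \<Rightarrow> real^24 \<Rightarrow> 3" where
  "glue i v = of_int \<lfloor>v \<bullet> a i - v \<bullet> b i\<rfloor>"

definition dual_vec :: "12 \<Rightarrow> real^24" where
  "dual_vec i = (1/3) *\<^sub>R (2 *\<^sub>R a i + b i)"

text \<open>The sign by which the glue class read off with the base \<open>(x, y)\<close> differs from \<open>glue i\<close>.\<close>
definition base_sign :: "12 \<Rightarrow> real^24 \<Rightarrow> real^24 \<Rightarrow> 3" where
  "base_sign i x y = of_int \<lfloor>dual_vec i \<bullet> x - dual_vec i \<bullet> y\<rfloor>"

lemma root_dual_lattice: "v \<in> N \<Longrightarrow> root_dual v"
  unfolding root_dual_def using lattice_inner_Ints a_in_lattice b_in_lattice by blast

lemma root_dual_diff: "root_dual v \<Longrightarrow> root_dual w \<Longrightarrow> root_dual (v - w)"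
  unfolding root_dual_def by (simp add: inner_diff_left)

lemma root_dual_floor:
  "root_dual v \<Longrightarrow> v \<bullet> a i = of_int \<lfloor>v \<bullet> a i\<rfloor> \<and> v \<bullet> b i = of_int \<lfloor>v \<bullet> b i\<rfloor>"
  unfolding root_dual_def by (metis Ints_cases floor_of_int)

lemma root_dual_inner_A2_base: "A2_base i x y \<Longrightarrow> root_dual v \<Longrightarrow> v \<bullet> x \<in> \<int> \<and> v \<bullet> y \<in> \<int>"
  by (elim A2_baseE) (simp add: root_dual_def comp_vec_def inner_add_right)

lemma glue_eqI: "v \<bullet> a i = of_int M \<Longrightarrow> v \<bullet> b i = of_int K \<Longrightarrow> glue i v = of_int (M - K)"
  unfolding glue_def by (metis floor_of_int of_int_diff)

lemma glue_root_dual: "root_dual v \<Longrightarrow> glue i v = of_int (\<lfloor>v \<bullet> a i\<rfloor> - \<lfloor>v \<bullet> b i\<rfloor>)"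
  using root_dual_floor glue_eqI by blast

lemma glue_add: "root_dual v \<Longrightarrow> root_dual w \<Longrightarrow> glue i (v + w) = glue i v + glue i w"
proof -
  assume v: "root_dual v" and w: "root_dual w"
  have "glue i (v + w) = of_int ((\<lfloor>v \<bullet> a i\<rfloor> + \<lfloor>w \<bullet> a i\<rfloor>) - (\<lfloor>v \<bullet> b i\<rfloor> + \<lfloor>w \<bullet> b i\<rfloor>))"
    by (rule glue_eqI) (use root_dual_floor[OF v] root_dual_floor[OF w] in \<open>auto simp: inner_add_left\<close>)
  moreover note glue_root_dual[OF v, of i] glue_root_dual[OF w, of i]
  ultimately show ?thesis by (simp only: of_int_add of_int_diff) (simp add: algebra_simps)
qed

lemma glue_diff: "root_dual v \<Longrightarrow> root_dual w \<Longrightarrow> glue i (v - w) = glue i v - glue i w"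
  using glue_add[of "v - w" w] root_dual_diff by (simp add: eq_diff_eq)

lemma glue_zero: "glue i 0 = 0"
  unfolding glue_def by simp

lemma glue_comp_vec: "glue j (comp_vec i u w) = 0"
proof -
  have "glue j (comp_vec i u w)
      = of_int ((if i = j then 2*u - w else 0) - (if i = j then 2*w - u else 0))"
    by (rule glue_eqI) (simp_all add: inner_comp_vec_a inner_comp_vec_b)
  also have "\<dots> = 0" by (subst of_int_F3_eq_0_iff) auto
  finally show ?thesis .
qed

lemma inner_dual_vec_a: "dual_vec i \<bullet> a j = (if i = j then 1 else 0)"
  unfolding dual_vec_def by (simp add: inner_add_left inner_ab)

lemma inner_dual_vec_b: "dual_vec i \<bullet> b j = 0"
  unfolding dual_vec_def by (simp add: inner_add_left inner_ab)

lemma inner_dual_vec_dual_vec: "dual_vec i \<bullet> dual_vec j = (if i = j then 2/3 else 0)"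
  unfolding dual_vec_def by (simp add: inner_add_left inner_add_right inner_ab)

lemma inner_dual_vec_comp_vec: "dual_vec i \<bullet> comp_vec j u w = (if i = j then of_int u else 0)"
  unfolding comp_vec_def by (simp add: inner_add_right inner_dual_vec_a inner_dual_vec_b)

lemma glue_A2_base:
  assumes "A2_base i x y" "root_dual v"
  shows "of_int \<lfloor>v \<bullet> x - v \<bullet> y\<rfloor> = base_sign i x y * glue i v"
proof -
  obtain u1 w1 u2 w2 where x: "x = comp_vec i u1 w1" and y: "y = comp_vec i u2 w2"
    and "3 dvd (u1 - u2 + w1 - w2)"
    using assms(1) by (elim A2_baseE)
  then obtain k where "u1 - u2 + w1 - w2 = 3 * k" by blast
  then have w1: "w1 = 3 * k - u1 + u2 + w2" by simp
  obtain M K where M: "v \<bullet> a i = of_int M" and K: "v \<bullet> b i = of_int K"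
    using assms(2) unfolding root_dual_def by (metis Ints_cases)
  have "v \<bullet> x - v \<bullet> y = of_int ((u1 - u2) * (M - K) + 3 * (k * K))"
    unfolding x y comp_vec_def w1 by (simp add: inner_add_right M K algebra_simps)
  then have "of_int \<lfloor>v \<bullet> x - v \<bullet> y\<rfloor> = (of_int ((u1 - u2) * (M - K) + 3 * (k * K)) :: 3)"
    by (simp only: floor_of_int)
  also have "\<dots> = of_int (u1 - u2) * of_int (M - K)"
    using of_int_F3_eq_0_iff[of "3 * (k * K)"] by simp
  also have "\<dots> = base_sign i x y * glue i v"
    unfolding base_sign_def x y glue_eqI[OF M K] by (simp add: inner_dual_vec_comp_vec)
  finally show ?thesis .
qed

lemma base_sign_square: "A2_base i x y \<Longrightarrow> base_sign i x y * base_sign i x y = 1"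
proof (elim A2_baseE)
  fix u1 w1 u2 w2
  assume "x = comp_vec i u1 w1" "y = comp_vec i u2 w2" "\<not> 3 dvd (u1 - u2)"
  then show ?thesis
    unfolding base_sign_def
    by (simp add: inner_dual_vec_comp_vec F3_square_nonzero of_int_F3_eq_0_iff del: of_int_diff)
qed

lemma base_sign_ab: "base_sign i (a i) (b i) = 1"
  unfolding base_sign_def by (simp add: inner_dual_vec_a inner_dual_vec_b)

lemma base_sign_neg_ab: "base_sign i (- a i) (- b i) = -1"
proof -
  have "\<lfloor>- 1 :: real\<rfloor> = - 1" by (metis floor_of_int of_int_1 of_int_minus)
  then show ?thesis unfolding base_sign_def by (simp add: inner_dual_vec_a inner_dual_vec_b)
qed

definition coord_x :: "real^24 \<Rightarrow> real^24 \<Rightarrow> real^24 \<Rightarrow> real" where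
  "coord_x v x y = (2 * (v \<bullet> x) + v \<bullet> y) / 3"

definition coord_y :: "real^24 \<Rightarrow> real^24 \<Rightarrow> real^24 \<Rightarrow> real" where
  "coord_y v x y = (v \<bullet> x + 2 * (v \<bullet> y)) / 3"

definition A2_part :: "(12 \<Rightarrow> real^24) \<Rightarrow> (12 \<Rightarrow> real^24) \<Rightarrow> real^24 \<Rightarrow> 12 \<Rightarrow> real^24" where
  "A2_part X Y v i = coord_x v (X i) (Y i) *\<^sub>R X i + coord_y v (X i) (Y i) *\<^sub>R Y i"

lemma inner_A2_part:
  assumes "\<And>i. A2_base i (X i) (Y i)"
  shows "A2_part X Y v i \<bullet> X j = (if i = j then v \<bullet> X j else 0)"
    and "A2_part X Y v i \<bullet> Y j = (if i = j then v \<bullet> Y j else 0)"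
proof -
  have "A2_part X Y v i \<bullet> X j
      = coord_x v (X i) (Y i) * (X i \<bullet> X j) + coord_y v (X i) (Y i) * (Y i \<bullet> X j)"
    "A2_part X Y v i \<bullet> Y j
      = coord_x v (X i) (Y i) * (X i \<bullet> Y j) + coord_y v (X i) (Y i) * (Y i \<bullet> Y j)"
    unfolding A2_part_def by (simp_all add: inner_add_left)
  moreover have "X i \<bullet> X j = 0 \<and> X i \<bullet> Y j = 0 \<and> Y i \<bullet> X j = 0 \<and> Y i \<bullet> Y j = 0" if "i \<noteq> j"
    using A2_base_orthogonal[OF assms[of i] assms[of j] that] .
  ultimately show "A2_part X Y v i \<bullet> X j = (if i = j then v \<bullet> X j else 0)"
    and "A2_part X Y v i \<bullet> Y j = (if i = j then v \<bullet> Y j else 0)"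
    using A2_base_inner[OF assms[of j]] unfolding coord_x_def coord_y_def by (auto simp: field_simps)
qed

lemma A2_frame_decomp:
  assumes X: "\<And>i. A2_base i (X i) (Y i)"
  shows "v = (\<Sum>i\<in>UNIV. A2_part X Y v i)"
proof -
  define z where "z = v - (\<Sum>i\<in>UNIV. A2_part X Y v i)"
  have "z \<bullet> X j = 0 \<and> z \<bullet> Y j = 0" for j
    unfolding z_def by (simp add: inner_diff_left inner_sum_left inner_A2_part[OF X])
  then have "z = 0"
    using A2_base_perp[OF X] orthogonal_to_roots_eq_0 by blast
  then show ?thesis unfolding z_def by simp
qed

lemma inner_A2_frame:
  "(\<And>i. A2_base i (X i) (Y i)) \<Longrightarrow>
     v \<bullet> w = (\<Sum>i\<in>UNIV. coord_x v (X i) (Y i) * (X i \<bullet> w) + coord_y v (X i) (Y i) * (Y i \<bullet> w))"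
proof -
  assume X: "\<And>i. A2_base i (X i) (Y i)"
  have "v \<bullet> w = (\<Sum>i\<in>UNIV. A2_part X Y v i) \<bullet> w"
    by (rule arg_cong[where f = "\<lambda>u. u \<bullet> w", OF A2_frame_decomp[OF X]])
  then show ?thesis by (simp add: A2_part_def inner_sum_left inner_add_left)
qed

lemma A2_part_glue_zero:
  assumes "root_dual v" "glue i v = 0"
  shows "\<exists>m k. A2_part a b v i = comp_vec i m k"
proof -
  obtain M K where MK: "v \<bullet> a i = of_int M" "v \<bullet> b i = of_int K"
    using assms(1) unfolding root_dual_def by (metis Ints_cases)
  have "(of_int (M - K) :: 3) = 0" using assms(2) glue_eqI[OF MK] by simp
  then obtain t where t: "M - K = 3 * t" unfolding of_int_F3_eq_0_iff by blast
  have "coord_x v (a i) (b i) = of_int (M - t)" "coord_y v (a i) (b i) = of_int (K + t)"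
    unfolding coord_x_def coord_y_def MK using t by (simp_all add: field_simps)
  then show ?thesis unfolding A2_part_def comp_vec_def
    by (intro exI[of _ "M - t"] exI[of _ "K + t"]) simp
qed

lemma glue_sum_comp_vec: "glue j (\<Sum>i\<in>F. comp_vec i (m i) (k i)) = 0"
proof -
  have "glue j (\<Sum>i\<in>F. comp_vec i (m i) (k i))
      = of_int ((\<Sum>i\<in>F. if i = j then 2 * m i - k i else 0)
          - (\<Sum>i\<in>F. if i = j then 2 * k i - m i else 0))"
    by (rule glue_eqI) (simp_all add: inner_sum_left inner_comp_vec_a inner_comp_vec_b)
  also have "\<dots> = 0"
    by (subst of_int_F3_eq_0_iff) (auto simp: sum_subtractf[symmetric] intro!: dvd_sum)
  finally show ?thesis .
qed

lemma root_dual_glue_zero_in_lattice: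
  assumes "root_dual v" "\<And>i. glue i v = 0"
  shows "v \<in> N"
proof -
  have "A2_part a b v i \<in> N" for i
    using A2_part_glue_zero[OF assms(1,2), of i] comp_vec_in_lattice by auto
  then have "(\<Sum>i\<in>UNIV. A2_part a b v i) \<in> N"
    by (rule lattice_sum)
  then show ?thesis
    using A2_frame_decomp[OF A2_base_ab, of v] by (simp only:)
qed

definition glue_word :: "real^24 \<Rightarrow> 12 \<Rightarrow> 3" where
  "glue_word v = (\<lambda>i. glue i v)"

definition glue_code :: "(12 \<Rightarrow> 3) set" where
  "glue_code = glue_word ` N"

lemma lattice_glue_codeI:
  assumes "root_dual w" "glue_word w \<in> glue_code"
  shows "w \<in> N"
proof -
  obtain v where v: "v \<in> N" "glue_word v = glue_word w"
    using assms(2) unfolding glue_code_def by auto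
  have "w - v \<in> N"
    using assms(1) root_dual_lattice[OF v(1)] v(2)
    by (intro root_dual_glue_zero_in_lattice)
      (auto simp: root_dual_diff glue_diff glue_word_def fun_eq_iff)
  from lattice_add[OF this v(1)] show ?thesis by simp
qed

lemma inner_root_coords:
  "3 * (v \<bullet> w) =
    (\<Sum>i\<in>UNIV. (2 * (v \<bullet> a i) + v \<bullet> b i) * (w \<bullet> a i) + (v \<bullet> a i + 2 * (v \<bullet> b i)) * (w \<bullet> b i))"
proof -
  have "3 * (v \<bullet> w)
      = (\<Sum>i\<in>UNIV. 3 * (coord_x v (a i) (b i) * (a i \<bullet> w) + coord_y v (a i) (b i) * (b i \<bullet> w)))"
    using inner_A2_frame[OF A2_base_ab, of v w] by (simp add: sum_distrib_left)
  also have "\<dots> =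
      (\<Sum>i\<in>UNIV. (2 * (v \<bullet> a i) + v \<bullet> b i) * (w \<bullet> a i) + (v \<bullet> a i + 2 * (v \<bullet> b i)) * (w \<bullet> b i))"
    unfolding coord_x_def coord_y_def inner_commute[of "a _" w] inner_commute[of "b _" w]
    by (rule sum.cong) (simp_all add: field_simps)
  finally show ?thesis .
qed

text \<open>The discriminant form of \<open>A\<^sub>2\<close>: on \<open>A\<^sub>2\<^sup>*/A\<^sub>2 \<cong> F\<^sub>3\<close> three times the inner product is
  minus the product of the glue classes.\<close>
lemma of_int_A2_inner:
  "(of_int ((2*M + K) * M' + (M + 2*K) * K') :: 3) = - (of_int (M - K) * of_int (M' - K'))"
proof -
  have "(2*M + K) * M' + (M + 2*K) * K'
      = (M - K) * (M' - K') + (M - K) * (M' - K') + 3 * (M * K' + K * M')"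
    by (simp add: algebra_simps)
  moreover have "(of_int (3 * (M * K' + K * M')) :: 3) = 0"
    by (subst of_int_F3_eq_0_iff) simp
  ultimately show ?thesis
    by (simp only: of_int_add of_int_mult F3_double) simp
qed

lemma inner_root_dual_Ints_iff:
  assumes v: "root_dual v" and w: "root_dual w"
  shows "v \<bullet> w \<in> \<int> \<longleftrightarrow> (\<Sum>i\<in>UNIV. glue i v * glue i w) = 0"
proof -
  define M where "M i = \<lfloor>v \<bullet> a i\<rfloor>" for i
  define K where "K i = \<lfloor>v \<bullet> b i\<rfloor>" for i
  define M' where "M' i = \<lfloor>w \<bullet> a i\<rfloor>" for i
  define K' where "K' i = \<lfloor>w \<bullet> b i\<rfloor>" for i
  have v_ab: "v \<bullet> a i = of_int (M i)" "v \<bullet> b i = of_int (K i)"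
    and w_ab: "w \<bullet> a i = of_int (M' i)" "w \<bullet> b i = of_int (K' i)" for i
    using root_dual_floor[OF v] root_dual_floor[OF w] unfolding M_def K_def M'_def K'_def by simp_all
  define S where "S = (\<Sum>i\<in>UNIV. (2 * M i + K i) * M' i + (M i + 2 * K i) * K' i)"
  have vw: "3 * (v \<bullet> w) = of_int S"
    unfolding inner_root_coords S_def v_ab w_ab by simp
  have "(\<Sum>i\<in>UNIV. glue i v * glue i w) = - of_int S"
    unfolding S_def glue_eqI[OF v_ab] glue_eqI[OF w_ab] of_int_sum of_int_A2_inner
    by (simp add: sum_negf)
  moreover have "v \<bullet> w \<in> \<int> \<longleftrightarrow> 3 dvd S"
  proof
    assume "v \<bullet> w \<in> \<int>"
    then obtain n where "v \<bullet> w = of_int n" by (auto elim: Ints_cases)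
    then have "S = 3 * n" using vw by (metis of_int_eq_iff of_int_mult of_int_numeral)
    then show "3 dvd S" by simp
  next
    assume "3 dvd S"
    then show "v \<bullet> w \<in> \<int>" using vw by (auto simp: field_simps)
  qed
  ultimately show ?thesis by (simp add: of_int_F3_eq_0_iff[symmetric])
qed

definition glue_lift :: "(12 \<Rightarrow> 3) \<Rightarrow> real^24" where
  "glue_lift c = (\<Sum>i\<in>UNIV. of_int (F3_rep (c i)) *\<^sub>R dual_vec i)"

lemma inner_glue_lift_a: "glue_lift c \<bullet> a j = of_int (F3_rep (c j))"
  unfolding glue_lift_def by (simp add: inner_sum_left inner_dual_vec_a if_distrib cong: if_cong)

lemma inner_glue_lift_b: "glue_lift c \<bullet> b j = 0"
  unfolding glue_lift_def by (simp add: inner_sum_left inner_dual_vec_b)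

lemma root_dual_glue_lift: "root_dual (glue_lift c)"
  unfolding root_dual_def inner_glue_lift_a inner_glue_lift_b by simp

lemma glue_word_glue_lift: "glue_word (glue_lift c) = c"
proof -
  have "glue j (glue_lift c) = of_int (F3_rep (c j) - 0)" for j
    by (rule glue_eqI) (simp_all add: inner_glue_lift_a inner_glue_lift_b)
  then show ?thesis using F3_rep by (simp add: glue_word_def fun_eq_iff)
qed

lemma glue_lift_norm: "glue_lift c \<bullet> glue_lift c = 2/3 * card {i. c i \<noteq> 0}"
proof -
  have dual: "dual_vec i \<bullet> glue_lift c = of_int (F3_rep (c i)) * (2/3)" for i
    unfolding glue_lift_def
    by (simp add: inner_sum_right inner_dual_vec_dual_vec if_distrib cong: if_cong)
  have "glue_lift c \<bullet> glue_lift c = (\<Sum>i\<in>UNIV. of_int (F3_rep (c i)) * (dual_vec i \<bullet> glue_lift c))"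
    by (subst (1) glue_lift_def) (simp add: inner_sum_left)
  also have "\<dots> = (\<Sum>i\<in>UNIV. 2/3 * of_int (F3_rep (c i) * F3_rep (c i)))"
    by (simp only: dual) (simp add: algebra_simps)
  also have "\<dots> = (\<Sum>i\<in>UNIV. if c i = 0 then 0 else 2/3)"
    using F3_rep by (intro sum.cong) simp_all
  also have "\<dots> = (\<Sum>i\<in>{i. c i \<noteq> 0}. 2/3)"
    by (rule sum.mono_neutral_cong_right) auto
  finally show ?thesis by simp
qed

text \<open>The lift of a codeword has norm \<open>2/3\<close> times its weight, so evenness of \<open>N\<close> leaves
  weights 0 and 3; in the latter case the lift is a root, whose glue word is 0.\<close>
lemma glue_code_weight_le_3:
  assumes c: "c \<in> glue_code" and weight: "card {i. c i \<noteq> 0} \<le> 3"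
  shows "c = (\<lambda>i. 0)"
proof -
  define w where "w = glue_lift c"
  have w: "w \<in> N"
    unfolding w_def
    by (rule lattice_glue_codeI[OF root_dual_glue_lift]) (simp add: glue_word_glue_lift c)
  obtain k :: int where "w \<bullet> w = 2 * of_int k" using even[OF w] by blast
  then have "real (card {i. c i \<noteq> 0}) = 3 * of_int k"
    using glue_lift_norm[of c] unfolding w_def by simp
  then have "int (card {i. c i \<noteq> 0}) = 3 * k"
    by (metis of_int_eq_iff of_int_mult of_int_of_nat_eq of_int_numeral)
  then have "card {i. c i \<noteq> 0} = 0 \<or> card {i. c i \<noteq> 0} = 3"
    using weight by presburger
  then show ?thesis
  proof
    assume "card {i. c i \<noteq> 0} = 0"
    then show ?thesis by (simp add: fun_eq_iff)
  next
    assume "card {i. c i \<noteq> 0} = 3"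
    then have "w \<in> lattice_roots N"
      using w glue_lift_norm[of c] unfolding w_def lattice_roots_def by simp
    then obtain i u v where "w = comp_vec i u v" using root_is_comp_vec by blast
    then show ?thesis
      using glue_word_glue_lift[of c] unfolding w_def glue_word_def by (simp add: glue_comp_vec)
  qed
qed

lemma self_dual_ternary_code_glue_code: "self_dual_ternary_code glue_code"
proof
  show "(\<lambda>i. 0) \<in> glue_code"
    using lattice_zero unfolding glue_code_def glue_word_def by (force simp: glue_zero)
next
  fix c d assume "c \<in> glue_code" "d \<in> glue_code"
  then obtain v w where v: "v \<in> N" "c = glue_word v" and w: "w \<in> N" "d = glue_word w"
    unfolding glue_code_def by blast
  have "glue_word (v + w) = (\<lambda>i. c i + d i)"
    unfolding v w glue_word_def using glue_add root_dual_lattice v w by auto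
  then show "(\<lambda>i. c i + d i) \<in> glue_code"
    unfolding glue_code_def using lattice_add[OF v(1) w(1)] by force
  show "(\<Sum>i\<in>UNIV. c i * d i) = 0"
    using inner_root_dual_Ints_iff[OF root_dual_lattice[OF v(1)] root_dual_lattice[OF w(1)]]
      lattice_inner_Ints[OF v(1) w(1)]
    unfolding v w glue_word_def by simp
next
  fix u assume u: "\<And>c. c \<in> glue_code \<Longrightarrow> (\<Sum>i\<in>UNIV. u i * c i) = 0"
  have "glue_lift u \<bullet> y \<in> \<int>" if "y \<in> N" for y
  proof -
    have "(\<Sum>i\<in>UNIV. u i * glue i y) = 0"
      using u[of "glue_word y"] that unfolding glue_code_def glue_word_def by simp
    then show ?thesis
      using inner_root_dual_Ints_iff[OF root_dual_glue_lift root_dual_lattice[OF that]]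
        glue_word_glue_lift[of u] unfolding glue_word_def by (simp add: fun_eq_iff)
  qed
  then have "glue_lift u \<in> N" using unimodular by blast
  then show "u \<in> glue_code"
    unfolding glue_code_def
    by (rule image_eqI[where f = glue_word, OF glue_word_glue_lift[symmetric, of u]])
next
  show "c \<in> glue_code \<Longrightarrow> card {i. c i \<noteq> 0} \<le> 3 \<Longrightarrow> c = (\<lambda>i. 0)" for c
    by (rule glue_code_weight_le_3)
qed

end

context A2_12_lattice
begin

definition frame_map ::
  "(12 \<Rightarrow> real^24) \<Rightarrow> (12 \<Rightarrow> real^24) \<Rightarrow> (12 \<Rightarrow> real^24) \<Rightarrow> (12 \<Rightarrow> real^24) \<Rightarrow> real^24 \<Rightarrow> real^24"
  where "frame_map X Y X' Y' v =
    (\<Sum>i\<in>UNIV. coord_x v (X i) (Y i) *\<^sub>R X' i + coord_y v (X i) (Y i) *\<^sub>R Y' i)"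

lemma linear_frame_map: "linear (frame_map X Y X' Y')"
proof (rule linearI)
  fix v w :: "real^24" and r :: real
  show "frame_map X Y X' Y' (v + w) = frame_map X Y X' Y' v + frame_map X Y X' Y' w"
    unfolding frame_map_def coord_x_def coord_y_def
    by (simp add: inner_add_left sum.distrib[symmetric] add_divide_distrib scaleR_add_left
        algebra_simps)
  show "frame_map X Y X' Y' (r *\<^sub>R v) = r *\<^sub>R frame_map X Y X' Y' v"
    unfolding frame_map_def coord_x_def coord_y_def
    by (simp add: scaleR_sum_right scaleR_add_right algebra_simps)
qed

context
  fixes X Y X' Y' :: "12 \<Rightarrow> real^24" and \<pi> :: "12 \<Rightarrow> 12"
  assumes frame: "\<And>i. A2_base i (X i) (Y i)"
    and frame': "\<And>i. A2_base (\<pi> i) (X' i) (Y' i)"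
    and inj_\<pi>: "inj \<pi>"
begin

lemma frame_map_inner_base:
  "frame_map X Y X' Y' v \<bullet> X' j = v \<bullet> X j \<and> frame_map X Y X' Y' v \<bullet> Y' j = v \<bullet> Y j"
proof -
  have "X' i \<bullet> X' j = 0 \<and> X' i \<bullet> Y' j = 0 \<and> Y' i \<bullet> X' j = 0 \<and> Y' i \<bullet> Y' j = 0" if "i \<noteq> j" for i
    using A2_base_orthogonal[OF frame'[of i] frame'[of j]] inj_\<pi> that unfolding inj_def by blast
  then have "frame_map X Y X' Y' v \<bullet> X' j
      = coord_x v (X j) (Y j) * (X' j \<bullet> X' j) + coord_y v (X j) (Y j) * (Y' j \<bullet> X' j)"
    "frame_map X Y X' Y' v \<bullet> Y' j
      = coord_x v (X j) (Y j) * (X' j \<bullet> Y' j) + coord_y v (X j) (Y j) * (Y' j \<bullet> Y' j)"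
    unfolding frame_map_def inner_sum_left inner_add_left inner_scaleR_left
    by (auto intro: sum_eq_single)
  then show ?thesis
    using A2_base_inner[OF frame'[of j]] unfolding coord_x_def coord_y_def by (simp add: field_simps)
qed

lemma frame_map_inner: "frame_map X Y X' Y' v \<bullet> frame_map X Y X' Y' w = v \<bullet> w"
proof -
  have "frame_map X Y X' Y' v \<bullet> frame_map X Y X' Y' w
      = (\<Sum>j\<in>UNIV. coord_x w (X j) (Y j) * (frame_map X Y X' Y' v \<bullet> X' j)
          + coord_y w (X j) (Y j) * (frame_map X Y X' Y' v \<bullet> Y' j))"
    by (subst (2) frame_map_def) (simp add: inner_sum_right inner_add_right)
  also have "\<dots> = (\<Sum>j\<in>UNIV. coord_x w (X j) (Y j) * (v \<bullet> X j) + coord_y w (X j) (Y j) * (v \<bullet> Y j))"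
    using frame_map_inner_base by simp
  also have "\<dots> = (\<Sum>j\<in>UNIV. coord_x w (X j) (Y j) * (X j \<bullet> v) + coord_y w (X j) (Y j) * (Y j \<bullet> v))"
    by (simp only: inner_commute[of v])
  also have "\<dots> = w \<bullet> v"
    by (rule inner_A2_frame[OF frame, symmetric])
  finally show ?thesis by (metis inner_commute)
qed

lemma frame_map_base: "frame_map X Y X' Y' (X j) = X' j" "frame_map X Y X' Y' (Y j) = Y' j"
proof -
  have "X j \<bullet> X i = 0 \<and> X j \<bullet> Y i = 0 \<and> Y j \<bullet> X i = 0 \<and> Y j \<bullet> Y i = 0" if "i \<noteq> j" for i
    using A2_base_orthogonal[OF frame[of j] frame[of i]] that by auto
  then have "frame_map X Y X' Y' (X j)
      = coord_x (X j) (X j) (Y j) *\<^sub>R X' j + coord_y (X j) (X j) (Y j) *\<^sub>R Y' j"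
    "frame_map X Y X' Y' (Y j)
      = coord_x (Y j) (X j) (Y j) *\<^sub>R X' j + coord_y (Y j) (X j) (Y j) *\<^sub>R Y' j"
    unfolding frame_map_def by (auto intro!: sum_eq_single simp: coord_x_def coord_y_def)
  then show "frame_map X Y X' Y' (X j) = X' j" "frame_map X Y X' Y' (Y j) = Y' j"
    using A2_base_inner[OF frame[of j]] unfolding coord_x_def coord_y_def by simp_all
qed

lemma root_dual_frame_map:
  assumes "root_dual v"
  shows "root_dual (frame_map X Y X' Y' v)"
  unfolding root_dual_def
proof
  fix k
  obtain j where j: "k = \<pi> j"
    using inj_\<pi> finite_UNIV_inj_surj[OF finite inj_\<pi>] by (metis surjD)
  obtain p q r s :: int where "\<forall>z. z \<bullet> a k = of_int p * (z \<bullet> X' j) + of_int q * (z \<bullet> Y' j)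
      \<and> z \<bullet> b k = of_int r * (z \<bullet> X' j) + of_int s * (z \<bullet> Y' j)"
    using A2_base_spans_ab[OF frame'[of j]] j by blast
  moreover have "v \<bullet> X j \<in> \<int>" "v \<bullet> Y j \<in> \<int>"
    using root_dual_inner_A2_base[OF frame[of j] assms] by auto
  ultimately show "frame_map X Y X' Y' v \<bullet> a k \<in> \<int> \<and> frame_map X Y X' Y' v \<bullet> b k \<in> \<int>"
    using frame_map_inner_base by simp
qed

lemma glue_frame_map:
  assumes "root_dual v"
  shows "glue (\<pi> j) (frame_map X Y X' Y' v)
    = base_sign (\<pi> j) (X' j) (Y' j) * base_sign j (X j) (Y j) * glue j v"
proof -
  let ?s' = "base_sign (\<pi> j) (X' j) (Y' j)"
  have "?s' * glue (\<pi> j) (frame_map X Y X' Y' v) = base_sign j (X j) (Y j) * glue j v"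
    using glue_A2_base[OF frame'[of j] root_dual_frame_map[OF assms]]
      glue_A2_base[OF frame[of j] assms] frame_map_inner_base by simp
  then have "(?s' * ?s') * glue (\<pi> j) (frame_map X Y X' Y' v)
      = ?s' * base_sign j (X j) (Y j) * glue j v"
    by (metis mult.assoc)
  then show ?thesis using base_sign_square[OF frame'[of j]] by simp
qed

theorem frame_map_lattice_aut:
  assumes code: "\<And>c. c \<in> glue_code \<Longrightarrow>
    \<exists>c'\<in>glue_code. \<forall>j. c' (\<pi> j) = base_sign (\<pi> j) (X' j) (Y' j) * base_sign j (X j) (Y j) * c j"
  shows "lattice_aut N (frame_map X Y X' Y')"
proof -
  have orth: "orthogonal_transformation (frame_map X Y X' Y')"
    unfolding orthogonal_transformation_def using linear_frame_map frame_map_inner by blast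
  have into: "frame_map X Y X' Y' v \<in> N" if v: "v \<in> N" for v
  proof -
    obtain c' where c': "c' \<in> glue_code"
      "\<forall>j. c' (\<pi> j) = base_sign (\<pi> j) (X' j) (Y' j) * base_sign j (X j) (Y j) * glue j v"
      using code[of "glue_word v"] v unfolding glue_code_def glue_word_def by auto
    have "glue (\<pi> j) (frame_map X Y X' Y' v) = c' (\<pi> j)" for j
      using glue_frame_map[OF root_dual_lattice[OF v]] c'(2) by simp
    moreover have "surj \<pi>" using inj_\<pi> finite_UNIV_inj_surj[OF finite] by blast
    ultimately have "glue_word (frame_map X Y X' Y' v) = c'"
      unfolding glue_word_def fun_eq_iff by (metis surjD)
    then show ?thesis
      using lattice_glue_codeI[OF root_dual_frame_map[OF root_dual_lattice[OF v]]] c'(1) by simp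
  qed
  have "w \<in> (frame_map X Y X' Y') ` N" if w: "w \<in> N" for w
  proof -
    obtain v where v: "w = frame_map X Y X' Y' v"
      using orthogonal_transformation_surj[OF orth] by (metis surjD)
    have "v \<bullet> y \<in> \<int>" if "y \<in> N" for y
      using lattice_inner_Ints[OF w into[OF that]] frame_map_inner v by simp
    then show ?thesis using unimodular v by blast
  qed
  then show ?thesis
    unfolding lattice_aut_def using orth into by blast
qed

end

end

lemma niemeier_A2_12_lattice:
  assumes "niemeier_A2_12 N"
  obtains a b where "A2_12_lattice N a b"
proof -
  from assms have eu: "even_unimodular24 N" and rs: "root_system_A2_12 N"
    unfolding niemeier_A2_12_def by auto
  from rs obtain a b :: "12 \<Rightarrow> real^24" where
    ab: "\<forall>i. a i \<bullet> a i = 2 \<and> b i \<bullet> b i = 2 \<and> a i \<bullet> b i = -1" and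
    other: "\<forall>i j. i \<noteq> j \<longrightarrow> a i \<bullet> a j = 0 \<and> a i \<bullet> b j = 0 \<and> b i \<bullet> b j = 0" and
    roots: "lattice_roots N = (\<Union>i. {a i, - a i, b i, - b i, a i + b i, - (a i + b i)})"
    unfolding root_system_A2_12_def by blast
  have "A2_12_lattice N a b"
  proof
    show "(\<forall>y\<in>N. x \<bullet> y \<in> \<int>) \<longleftrightarrow> x \<in> N" for x
      using eu unfolding even_unimodular24_def by blast
    show "x \<in> N \<Longrightarrow> \<exists>k::int. x \<bullet> x = 2 * of_int k" for x
      using eu unfolding even_unimodular24_def by blast
    show "a i \<bullet> a i = 2" "b i \<bullet> b i = 2" "a i \<bullet> b i = -1" for i
      using ab by auto
    show "i \<noteq> j \<Longrightarrow> a i \<bullet> a j = 0 \<and> a i \<bullet> b j = 0 \<and> b i \<bullet> b j = 0" for i j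
      using other by blast
  qed (rule roots)
  then show ?thesis by (rule that)
qed

section \<open>The lattice \<open>P(-1)\<close>\<close>

lemma index3_cases: "(k::3) = 0 \<or> k = 1 \<or> k = 2"
  using exhaust_3[of k] by auto

lemma sum_UNIV_3: "(\<Sum>k\<in>UNIV. f k) = f (0::3) + f 1 + f 2"
proof -
  have UNIV_3: "(UNIV :: 3 set) = {0, 1, 2}" using index3_cases by auto
  show ?thesis unfolding UNIV_3 by (simp add: add.assoc)
qed

lemma inner_vec_3: "(x::real^3) \<bullet> y = x$0 * y$0 + x$1 * y$1 + x$2 * y$2"
  unfolding inner_vec_def sum_UNIV_3 by simp

lemma A2dual_block_3_Ints:
  assumes "A2dual_block y"
  shows "3 * y$k \<in> \<int>"
proof -
  have "3 * y$k = (\<Sum>i\<in>UNIV. y$k - y$i)"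
    using assms unfolding A2dual_block_def sum_UNIV_3 by simp
  also have "\<dots> \<in> \<int>"
    using assms unfolding A2dual_block_def by (intro Ints_sum) blast
  finally show ?thesis .
qed

lemma A2_glue_eq: "3 * y$0 = of_int m \<Longrightarrow> A2_glue y = of_int m"
  unfolding A2_glue_def by simp

lemma A2_glue_add:
  assumes "A2dual_block y" "A2dual_block z"
  shows "A2_glue (y + z) = A2_glue y + A2_glue z"
proof -
  obtain m n where "3 * y$0 = of_int m" "3 * z$0 = of_int n"
    using A2dual_block_3_Ints assms by (metis Ints_cases)
  then show ?thesis
    using A2_glue_eq[of y m] A2_glue_eq[of z n] A2_glue_eq[of "y + z" "m + n"]
      by (simp add: algebra_simps)
qed

lemma A2_glue_uminus:
  assumes "A2dual_block y"
  shows "A2_glue (- y) = - A2_glue y"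
proof -
  obtain m where "3 * y$0 = of_int m"
    using A2dual_block_3_Ints assms by (metis Ints_cases)
  then show ?thesis using A2_glue_eq[of y m] A2_glue_eq[of "- y" "- m"] by simp
qed

lemma A2dual_block_add:
  assumes "A2dual_block y" "A2dual_block z"
  shows "A2dual_block (y + z)"
  unfolding A2dual_block_def
proof (intro conjI allI)
  show "(y + z)$0 + (y + z)$1 + (y + z)$2 = 0"
    using assms unfolding A2dual_block_def by simp
  fix i j
  have "(y + z)$i - (y + z)$j = (y$i - y$j) + (z$i - z$j)" by simp
  then show "(y + z)$i - (y + z)$j \<in> \<int>"
    using assms unfolding A2dual_block_def by (metis Ints_add)
qed

lemma A2dual_block_uminus:
  assumes "A2dual_block y"
  shows "A2dual_block (- y)"
  unfolding A2dual_block_def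
proof (intro conjI allI)
  show "(- y)$0 + (- y)$1 + (- y)$2 = 0"
    using assms unfolding A2dual_block_def by simp
  fix i j
  have "(- y)$i - (- y)$j = - (y$i - y$j)" by simp
  then show "(- y)$i - (- y)$j \<in> \<int>"
    using assms unfolding A2dual_block_def by (metis Ints_minus)
qed

lemma P_lattice_add:
  assumes "x \<in> P_lattice" "y \<in> P_lattice"
  shows "x + y \<in> P_lattice"
proof -
  obtain \<alpha> \<beta> \<gamma> \<alpha>' \<beta>' \<gamma>' where x: "\<forall>p. A2dual_block (x$p)" "\<forall>a b. A2_glue (x$(a,b)) = \<alpha> * a + \<beta> * b + \<gamma>"
    and y: "\<forall>p. A2dual_block (y$p)" "\<forall>a b. A2_glue (y$(a,b)) = \<alpha>' * a + \<beta>' * b + \<gamma>'"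
    using assms unfolding P_lattice_def by blast
  then have "\<forall>a b. A2_glue ((x + y)$(a,b)) = (\<alpha> + \<alpha>') * a + (\<beta> + \<beta>') * b + (\<gamma> + \<gamma>')"
    by (simp add: A2_glue_add algebra_simps)
  moreover have "\<forall>p. A2dual_block ((x + y)$p)" using x(1) y(1) A2dual_block_add by simp
  ultimately show ?thesis unfolding P_lattice_def by blast
qed

lemma P_lattice_uminus:
  assumes "x \<in> P_lattice"
  shows "- x \<in> P_lattice"
proof -
  obtain \<alpha> \<beta> \<gamma> where x: "\<forall>p. A2dual_block (x$p)" "\<forall>a b. A2_glue (x$(a,b)) = \<alpha> * a + \<beta> * b + \<gamma>"
    using assms unfolding P_lattice_def by blast
  then have "\<forall>a b. A2_glue ((- x)$(a,b)) = (- \<alpha>) * a + (- \<beta>) * b + (- \<gamma>)"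
    by (simp add: A2_glue_uminus algebra_simps)
  moreover have "\<forall>p. A2dual_block ((- x)$p)" using x(1) A2dual_block_uminus by simp
  ultimately show ?thesis unfolding P_lattice_def by blast
qed

lemma P_lattice_zero: "0 \<in> P_lattice"
  unfolding P_lattice_def A2dual_block_def A2_glue_def by (auto intro!: exI[of _ 0])

lemma P_lattice_block: "x \<in> P_lattice \<Longrightarrow> A2dual_block (x$p)"
  unfolding P_lattice_def by blast

definition blk_r :: "real^3" where
  "blk_r = (\<chi> k. if k = 0 then 1 else if k = 1 then -1 else 0)"

definition blk_s :: "real^3" where
  "blk_s = (\<chi> k. if k = 0 then 0 else if k = 1 then 1 else -1)"

text \<open>The simple roots of the block of \<open>p\<close>: the classes of the two exceptional curves over the
  fixed point \<open>p\<close>.\<close>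
definition P_root_r :: "3 \<times> 3 \<Rightarrow> real^3^(3\<times>3)" where
  "P_root_r p = (\<chi> q. if q = p then blk_r else 0)"

definition P_root_s :: "3 \<times> 3 \<Rightarrow> real^3^(3\<times>3)" where
  "P_root_s p = (\<chi> q. if q = p then blk_s else 0)"

lemma blk_r_nth: "blk_r$0 = 1" "blk_r$1 = -1" "blk_r$2 = 0"
  unfolding blk_r_def by simp_all

lemma blk_s_nth: "blk_s$0 = 0" "blk_s$1 = 1" "blk_s$2 = -1"
  unfolding blk_s_def by simp_all

lemma P_root_r_nth: "P_root_r p $ q = (if q = p then blk_r else 0)"
  unfolding P_root_r_def by simp

lemma P_root_s_nth: "P_root_s p $ q = (if q = p then blk_s else 0)"
  unfolding P_root_s_def by simp

lemma inner_P_root_r: "x \<bullet> P_root_r p = x$p$0 - x$p$1"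
  by (simp add: inner_vec_def[of x] P_root_r_nth if_distrib inner_vec_3 blk_r_nth cong: if_cong)

lemma inner_P_root_s: "x \<bullet> P_root_s p = x$p$1 - x$p$2"
  by (simp add: inner_vec_def[of x] P_root_s_nth if_distrib inner_vec_3 blk_s_nth cong: if_cong)

lemma inner_P_roots:
  "P_root_r p \<bullet> P_root_r q = (if p = q then 2 else 0)"
  "P_root_s p \<bullet> P_root_s q = (if p = q then 2 else 0)"
  "P_root_r p \<bullet> P_root_s q = (if p = q then -1 else 0)"
  "P_root_s p \<bullet> P_root_r q = (if p = q then -1 else 0)"
  by (simp_all add: inner_P_root_r inner_P_root_s P_root_r_nth P_root_s_nth blk_r_nth blk_s_nth)

lemma P_root_r_in: "P_root_r p \<in> P_lattice" and P_root_s_in: "P_root_s p \<in> P_lattice"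
proof -
  have "A2dual_block blk_r" "A2dual_block blk_s" "A2dual_block 0"
    unfolding A2dual_block_def blk_r_def blk_s_def by simp_all
  moreover have "A2_glue blk_r = 0" "A2_glue blk_s = 0" "A2_glue 0 = 0"
    unfolding A2_glue_def blk_r_nth blk_s_nth by simp_all
  ultimately show "P_root_r p \<in> P_lattice" "P_root_s p \<in> P_lattice"
    unfolding P_lattice_def by (auto simp: P_root_r_nth P_root_s_nth intro!: exI[of _ 0])
qed

lemma P_lattice_triple:
  assumes x: "x \<in> P_lattice"
  shows "\<exists>A B :: 3\<times>3 \<Rightarrow> int.
    (3::real) *\<^sub>R x = (\<Sum>p\<in>UNIV. of_int (A p) *\<^sub>R P_root_r p + of_int (B p) *\<^sub>R P_root_s p)"
proof -
  define A where "A p = \<lfloor>3 * x$p$0\<rfloor>" for p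
  define B where "B p = \<lfloor>- 3 * x$p$2\<rfloor>" for p
  have A: "of_int (A p) = 3 * x$p$0" and B: "of_int (B p) = - 3 * x$p$2" for p
    unfolding A_def B_def using A2dual_block_3_Ints[OF P_lattice_block[OF x]]
    by (simp_all add: of_int_floor_Ints Ints_minus[of "3 * _", simplified])
  have s: "x$p$0 + x$p$1 + x$p$2 = 0" for p
    using P_lattice_block[OF x] unfolding A2dual_block_def by blast
  have "(3 *\<^sub>R x) $ q $ k
      = (\<Sum>p\<in>UNIV. of_int (A p) *\<^sub>R P_root_r p + of_int (B p) *\<^sub>R P_root_s p) $ q $ k"
    for q k
  proof -
    have "(\<Sum>p\<in>UNIV. of_int (A p) *\<^sub>R P_root_r p + of_int (B p) *\<^sub>R P_root_s p) $ q $ k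
        = of_int (A q) * blk_r$k + of_int (B q) * blk_s$k"
      by (simp add: P_root_r_nth P_root_s_nth if_distrib cong: if_cong)
    also have "\<dots> = 3 * x$q$k"
      using index3_cases[of k] A[of q] B[of q] s[of q]
        by (elim disjE) (simp_all add: blk_r_nth blk_s_nth)
    finally show ?thesis by simp
  qed
  then show ?thesis by (intro exI[of _ A] exI[of _ B]) (simp add: vec_eq_iff)
qed

definition P_glue :: "real^3^(3\<times>3) \<Rightarrow> 3\<times>3 \<Rightarrow> 3" where
  "P_glue x p = of_int \<lfloor>x \<bullet> P_root_r p - x \<bullet> P_root_s p\<rfloor>"

section \<open>Primitive embeddings of \<open>P(-1)\<close>\<close>

locale A2_12_embedding = A2_12_lattice +
  fixes \<iota> :: "real^3^(3\<times>3) \<Rightarrow> real^24"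
  assumes primitive: "primitive_embedding \<iota> P_lattice N"
begin

lemma embedding_in: "x \<in> P_lattice \<Longrightarrow> \<iota> x \<in> N"
  and embedding_add: "x \<in> P_lattice \<Longrightarrow> y \<in> P_lattice \<Longrightarrow> \<iota> (x + y) = \<iota> x + \<iota> y"
  and embedding_inner: "x \<in> P_lattice \<Longrightarrow> y \<in> P_lattice \<Longrightarrow> \<iota> x \<bullet> \<iota> y = x \<bullet> y"
  using primitive unfolding primitive_embedding_def isometric_embedding_def by blast+

lemma embedding_primitive:
  "v \<in> N \<Longrightarrow> (n::int) \<noteq> 0 \<Longrightarrow> of_int n *\<^sub>R v \<in> \<iota> ` P_lattice \<Longrightarrow> v \<in> \<iota> ` P_lattice"
  using primitive unfolding primitive_embedding_def by blast

lemma embedding_zero: "\<iota> 0 = 0"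
  using embedding_add[OF P_lattice_zero P_lattice_zero] by simp

lemma embedding_uminus:
  assumes "x \<in> P_lattice"
  shows "\<iota> (- x) = - \<iota> x"
proof -
  have "\<iota> x + \<iota> (- x) = 0"
    using embedding_add[OF assms P_lattice_uminus[OF assms]] embedding_zero by simp
  then show ?thesis by (simp add: add_eq_0_iff)
qed

lemma embedding_scaleR_int:
  assumes x: "x \<in> P_lattice"
  shows "of_int k *\<^sub>R x \<in> P_lattice \<and> \<iota> (of_int k *\<^sub>R x) = of_int k *\<^sub>R \<iota> x"
proof -
  have nat: "of_nat n *\<^sub>R x \<in> P_lattice \<and> \<iota> (of_nat n *\<^sub>R x) = of_nat n *\<^sub>R \<iota> x" for n
  proof (induction n)
    case (Suc n)
    then show ?case
      using P_lattice_add[OF x] embedding_add[OF x] by (simp add: scaleR_add_left)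
  qed (simp add: P_lattice_zero embedding_zero)
  show ?thesis
  proof (cases "k \<ge> 0")
    case True
    then show ?thesis using nat[of "nat k"] by simp
  next
    case False
    let ?y = "of_nat (nat (- k)) *\<^sub>R x"
    have "of_int k *\<^sub>R x = - ?y" using False by simp
    then show ?thesis
      using nat[of "nat (- k)"] P_lattice_uminus[of ?y] embedding_uminus[of ?y] False by simp
  qed
qed

lemma embedding_lincomb:
  "(\<Sum>p\<in>F. of_int (A p) *\<^sub>R P_root_r p + of_int (B p) *\<^sub>R P_root_s p) \<in> P_lattice \<and>
   \<iota> (\<Sum>p\<in>F. of_int (A p) *\<^sub>R P_root_r p + of_int (B p) *\<^sub>R P_root_s p)
     = (\<Sum>p\<in>F. of_int (A p) *\<^sub>R \<iota> (P_root_r p) + of_int (B p) *\<^sub>R \<iota> (P_root_s p))"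
proof (induction F rule: infinite_finite_induct)
  case (insert p F)
  have r: "of_int (A p) *\<^sub>R P_root_r p \<in> P_lattice"
    "\<iota> (of_int (A p) *\<^sub>R P_root_r p) = of_int (A p) *\<^sub>R \<iota> (P_root_r p)"
    and s: "of_int (B p) *\<^sub>R P_root_s p \<in> P_lattice"
    "\<iota> (of_int (B p) *\<^sub>R P_root_s p) = of_int (B p) *\<^sub>R \<iota> (P_root_s p)"
    using embedding_scaleR_int[OF P_root_r_in] embedding_scaleR_int[OF P_root_s_in] by auto
  have rs: "of_int (A p) *\<^sub>R P_root_r p + of_int (B p) *\<^sub>R P_root_s p \<in> P_lattice"
    using P_lattice_add[OF r(1) s(1)] .
  show ?case
    using insert P_lattice_add[OF rs] embedding_add[OF rs] r s embedding_add[OF r(1) s(1)] by simp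
qed (simp_all add: P_lattice_zero embedding_zero)

lemma embedding_triple:
  assumes x: "x \<in> P_lattice"
  shows "\<exists>A B :: 3\<times>3 \<Rightarrow> int.
    3 *\<^sub>R \<iota> x = (\<Sum>p\<in>UNIV. of_int (A p) *\<^sub>R \<iota> (P_root_r p) + of_int (B p) *\<^sub>R \<iota> (P_root_s p))"
proof -
  obtain A B where
    e: "(3::real) *\<^sub>R x = (\<Sum>p\<in>UNIV. of_int (A p) *\<^sub>R P_root_r p + of_int (B p) *\<^sub>R P_root_s p)"
    using P_lattice_triple[OF x] by blast
  have "3 *\<^sub>R \<iota> x = \<iota> ((3::real) *\<^sub>R x)"
    using embedding_scaleR_int[OF x, of 3] by simp
  also have "\<dots> = (\<Sum>p\<in>UNIV. of_int (A p) *\<^sub>R \<iota> (P_root_r p) + of_int (B p) *\<^sub>R \<iota> (P_root_s p))"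
    unfolding e using embedding_lincomb by blast
  finally show ?thesis by blast
qed

lemma embedding_roots: "\<iota> (P_root_r p) \<in> lattice_roots N" "\<iota> (P_root_s p) \<in> lattice_roots N"
  unfolding lattice_roots_def
  using embedding_in[OF P_root_r_in] embedding_in[OF P_root_s_in]
    embedding_inner[OF P_root_r_in P_root_r_in] embedding_inner[OF P_root_s_in P_root_s_in]
  by (auto simp: inner_P_roots)

definition comp :: "3\<times>3 \<Rightarrow> 12" where
  "comp p = (SOME i. \<exists>u w. (u, w) \<in> A2_root_coeffs \<and> \<iota> (P_root_r p) = comp_vec i u w)"

lemma A2_base_comp: "A2_base (comp p) (\<iota> (P_root_r p)) (\<iota> (P_root_s p))"
proof -
  have "\<exists>u w. (u, w) \<in> A2_root_coeffs \<and> \<iota> (P_root_r p) = comp_vec (comp p) u w"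
    unfolding comp_def by (rule someI_ex) (use root_is_comp_vec[OF embedding_roots(1)] in blast)
  then obtain u1 w1 where 1: "(u1, w1) \<in> A2_root_coeffs" "\<iota> (P_root_r p) = comp_vec (comp p) u1 w1"
    by blast
  obtain j u2 w2 where 2: "(u2, w2) \<in> A2_root_coeffs" "\<iota> (P_root_s p) = comp_vec j u2 w2"
    using root_is_comp_vec[OF embedding_roots(2)] by blast
  have "\<iota> (P_root_r p) \<bullet> \<iota> (P_root_s p) = -1"
    using embedding_inner[OF P_root_r_in P_root_s_in] by (simp add: inner_P_roots)
  then have e: "comp_vec (comp p) u1 w1 \<bullet> comp_vec j u2 w2 = -1" using 1 2 by simp
  then have j: "j = comp p" by (simp add: inner_comp_vec split: if_splits)
  then have "real_of_int (2*u1*u2 - u1*w2 - w1*u2 + 2*w1*w2) = -1" using e by (simp add: inner_comp_vec)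
  then have "2*u1*u2 - u1*w2 - w1*u2 + 2*w1*w2 = -1" by linarith
  then show ?thesis unfolding A2_base_def using 1 2 j by blast
qed

lemma inj_comp: "inj comp"
proof (rule injI, rule ccontr)
  fix p q assume e: "comp p = comp q" and ne: "p \<noteq> q"
  obtain u w u' w' where "(u, w) \<in> A2_root_coeffs" "\<iota> (P_root_r p) = comp_vec (comp p) u w"
    "(u', w') \<in> A2_root_coeffs" "\<iota> (P_root_r q) = comp_vec (comp q) u' w'"
    using A2_base_comp[of p] A2_base_comp[of q] by (elim A2_baseE) blast
  moreover have "\<iota> (P_root_r p) \<bullet> \<iota> (P_root_r q) = 0"
    using embedding_inner[OF P_root_r_in P_root_r_in] ne by (simp add: inner_P_roots)
  ultimately have "real_of_int (2*u*u' - u*w' - w*u' + 2*w*w') = 0"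
    using e by (simp add: inner_comp_vec)
  then have "2*u*u' - u*w' - w*u' + 2*w*w' = 0" by linarith
  then show False
    using A2_root_coeffs_inner_nonzero \<open>(u, w) \<in> A2_root_coeffs\<close> \<open>(u', w') \<in> A2_root_coeffs\<close> by blast
qed

lemma card_Compl_range_comp: "card (- range comp) = 3"
proof -
  have "card (range comp) = 9" using card_image[OF inj_comp] by simp
  moreover have "card (- range comp) = card (UNIV :: 12 set) - card (range comp)"
    unfolding Compl_eq_Diff_UNIV by (rule card_Diff_subset) auto
  ultimately show ?thesis by simp
qed

definition emb_X :: "12 \<Rightarrow> real^24" where
  "emb_X i = (if i \<in> range comp then \<iota> (P_root_r (inv comp i)) else a i)"

definition emb_Y :: "12 \<Rightarrow> real^24" where
  "emb_Y i = (if i \<in> range comp then \<iota> (P_root_s (inv comp i)) else b i)"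

lemma emb_XY_comp: "emb_X (comp p) = \<iota> (P_root_r p)" "emb_Y (comp p) = \<iota> (P_root_s p)"
  unfolding emb_X_def emb_Y_def using inv_f_f[OF inj_comp] by auto

lemma emb_XY_other: "i \<notin> range comp \<Longrightarrow> emb_X i = a i \<and> emb_Y i = b i"
  unfolding emb_X_def emb_Y_def by auto

lemma A2_base_emb: "A2_base i (emb_X i) (emb_Y i)"
proof (cases "i \<in> range comp")
  case True
  then obtain p where "i = comp p" by blast
  then show ?thesis using emb_XY_comp A2_base_comp by simp
next
  case False
  then show ?thesis using emb_XY_other A2_base_ab by simp
qed

lemma glue_embedding_other:
  assumes x: "x \<in> P_lattice" and t: "t \<notin> range comp"
  shows "glue t (\<iota> x) = 0"
proof -
  obtain A B where
    e: "3 *\<^sub>R \<iota> x = (\<Sum>p\<in>UNIV. of_int (A p) *\<^sub>R \<iota> (P_root_r p) + of_int (B p) *\<^sub>R \<iota> (P_root_s p))"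
    using embedding_triple[OF x] by blast
  have "\<iota> (P_root_r p) \<bullet> a t = 0 \<and> \<iota> (P_root_r p) \<bullet> b t = 0 \<and>
      \<iota> (P_root_s p) \<bullet> a t = 0 \<and> \<iota> (P_root_s p) \<bullet> b t = 0"
    for p
    using A2_base_orthogonal_ab[OF A2_base_comp[of p], of t] t by auto
  then have "(3 *\<^sub>R \<iota> x) \<bullet> a t = 0" "(3 *\<^sub>R \<iota> x) \<bullet> b t = 0"
    unfolding e by (simp_all add: inner_sum_left inner_add_left)
  then show ?thesis unfolding glue_def by simp
qed

definition emb_sign :: "3\<times>3 \<Rightarrow> 3" where
  "emb_sign p = base_sign (comp p) (\<iota> (P_root_r p)) (\<iota> (P_root_s p))"

lemma emb_sign_square: "emb_sign p * emb_sign p = 1"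
  unfolding emb_sign_def by (rule base_sign_square[OF A2_base_comp])

lemma glue_embedding_comp:
  assumes x: "x \<in> P_lattice"
  shows "glue (comp p) (\<iota> x) = emb_sign p * P_glue x p"
proof -
  have "P_glue x p = emb_sign p * glue (comp p) (\<iota> x)"
    using glue_A2_base[OF A2_base_comp root_dual_lattice[OF embedding_in[OF x]]]
      embedding_inner[OF x P_root_r_in] embedding_inner[OF x P_root_s_in]
    unfolding P_glue_def emb_sign_def by simp
  then have "emb_sign p * P_glue x p = (emb_sign p * emb_sign p) * glue (comp p) (\<iota> x)"
    by (simp add: mult.assoc)
  then show ?thesis using emb_sign_square by simp
qed


lemma embedding_part_triple:
  assumes v: "v \<in> N"
  shows "3 *\<^sub>R (\<Sum>i\<in>range comp. A2_part emb_X emb_Y v i) \<in> \<iota> ` P_lattice"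
proof -
  define A where "A p = \<lfloor>2 * (v \<bullet> \<iota> (P_root_r p)) + v \<bullet> \<iota> (P_root_s p)\<rfloor>" for p
  define B where "B p = \<lfloor>v \<bullet> \<iota> (P_root_r p) + 2 * (v \<bullet> \<iota> (P_root_s p))\<rfloor>" for p
  have "v \<bullet> \<iota> (P_root_r p) \<in> \<int>" "v \<bullet> \<iota> (P_root_s p) \<in> \<int>" for p
    using lattice_inner_Ints[OF v] embedding_in P_root_r_in P_root_s_in by blast+
  then have AB: "of_int (A p) = 2 * (v \<bullet> \<iota> (P_root_r p)) + v \<bullet> \<iota> (P_root_s p)"
    "of_int (B p) = v \<bullet> \<iota> (P_root_r p) + 2 * (v \<bullet> \<iota> (P_root_s p))" for p
    unfolding A_def B_def by (simp_all add: of_int_floor_Ints)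
  have "3 *\<^sub>R (\<Sum>i\<in>range comp. A2_part emb_X emb_Y v i)
      = (\<Sum>p\<in>UNIV. 3 *\<^sub>R A2_part emb_X emb_Y v (comp p))"
    by (simp add: scaleR_sum_right sum.reindex[OF inj_comp])
  also have "\<dots> = (\<Sum>p\<in>UNIV. of_int (A p) *\<^sub>R \<iota> (P_root_r p) + of_int (B p) *\<^sub>R \<iota> (P_root_s p))"
  proof -
    have "3 * coord_x v X Y = 2 * (v \<bullet> X) + v \<bullet> Y" "3 * coord_y v X Y = v \<bullet> X + 2 * (v \<bullet> Y)" for X Y
      unfolding coord_x_def coord_y_def by simp_all
    then show ?thesis
      unfolding A2_part_def emb_XY_comp scaleR_add_right scaleR_scaleR AB by simp
  qed
  also have "\<dots> = \<iota> (\<Sum>p\<in>UNIV. of_int (A p) *\<^sub>R P_root_r p + of_int (B p) *\<^sub>R P_root_s p)"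
    using embedding_lincomb by simp
  finally show ?thesis using embedding_lincomb by blast
qed

lemma embedding_other_part:
  assumes v: "v \<in> N" and other: "\<And>t. t \<notin> range comp \<Longrightarrow> glue t v = 0"
  shows "(\<Sum>i\<in>-range comp. A2_part emb_X emb_Y v i) \<in> N"
    and "glue j (\<Sum>i\<in>-range comp. A2_part emb_X emb_Y v i) = 0"
proof -
  have "\<forall>i\<in>-range comp. \<exists>m k. A2_part emb_X emb_Y v i = comp_vec i m k"
    using A2_part_glue_zero[OF root_dual_lattice[OF v] other]
    by (simp add: A2_part_def emb_XY_other)
  then obtain m k where mk: "\<And>i. i \<in> -range comp \<Longrightarrow> A2_part emb_X emb_Y v i = comp_vec i (m i) (k i)"
    by metis
  then have eq: "(\<Sum>i\<in>-range comp. A2_part emb_X emb_Y v i) = (\<Sum>i\<in>-range comp. comp_vec i (m i) (k i))"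
    by simp
  show "(\<Sum>i\<in>-range comp. A2_part emb_X emb_Y v i) \<in> N"
    unfolding eq by (rule lattice_sum) (rule comp_vec_in_lattice)
  show "glue j (\<Sum>i\<in>-range comp. A2_part emb_X emb_Y v i) = 0"
    unfolding eq by (rule glue_sum_comp_vec)
qed

text \<open>This is where the primitivity of \<open>\<iota>\<close> is used.\<close>
lemma embedding_glue_word:
  assumes v: "v \<in> N" and other: "\<And>t. t \<notin> range comp \<Longrightarrow> glue t v = 0"
  shows "\<exists>x\<in>P_lattice. glue_word (\<iota> x) = glue_word v"
proof -
  define v' where "v' = (\<Sum>i\<in>range comp. A2_part emb_X emb_Y v i)"
  define v'' where "v'' = (\<Sum>i\<in>-range comp. A2_part emb_X emb_Y v i)"
  have "v = v' + v''"
    unfolding v'_def v''_def using A2_frame_decomp[OF A2_base_emb, of v] sum_UNIV_Compl by metis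
  moreover have v'': "v'' \<in> N" "glue j v'' = 0" for j
    unfolding v''_def using embedding_other_part[OF v other] by auto
  ultimately have "v' = v - v''" by simp
  then have v': "v' \<in> N" "glue_word v' = glue_word v"
    using lattice_diff[OF v v''(1)] v''(2)
      glue_diff[OF root_dual_lattice[OF v] root_dual_lattice[OF v''(1)]]
    by (auto simp: glue_word_def)
  have "of_int 3 *\<^sub>R v' \<in> \<iota> ` P_lattice"
    using embedding_part_triple[OF v] unfolding v'_def by simp
  then have "v' \<in> \<iota> ` P_lattice"
    using embedding_primitive[OF v'(1), of 3] by simp
  then show ?thesis using v'(2) by auto
qed

end

section \<open>Two primitive embeddings are conjugate\<close>

locale A2_12_two_embeddings = A2_12_lattice N a b +
  E1: A2_12_embedding N a b \<iota>1 + E2: A2_12_embedding N a b \<iota>2 for N a b \<iota>1 \<iota>2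
begin

lemma glue_transfer:
  assumes c: "c \<in> glue_code" and other: "\<forall>t\<in>-range E1.comp. c t = 0"
  shows "\<exists>c'\<in>glue_code. (\<forall>t\<in>-range E2.comp. c' t = 0) \<and>
    (\<forall>p. c' (E2.comp p) = E2.emb_sign p * E1.emb_sign p * c (E1.comp p))"
proof -
  obtain v where v: "v \<in> N" "c = glue_word v"
    using c unfolding glue_code_def by auto
  obtain x where x: "x \<in> P_lattice" "glue_word (\<iota>1 x) = c"
    using E1.embedding_glue_word[OF v(1)] other v(2) unfolding glue_word_def by auto
  have "glue_word (\<iota>2 x) \<in> glue_code"
    unfolding glue_code_def using E2.embedding_in[OF x(1)] by blast
  moreover have "\<forall>t\<in>-range E2.comp. glue_word (\<iota>2 x) t = 0"
    using E2.glue_embedding_other[OF x(1)] by (simp add: glue_word_def)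
  moreover have "glue_word (\<iota>2 x) (E2.comp p) = E2.emb_sign p * E1.emb_sign p * c (E1.comp p)" for p
  proof -
    have "c (E1.comp p) = E1.emb_sign p * P_glue x p"
      using E1.glue_embedding_comp[OF x(1), of p] x(2) unfolding glue_word_def by auto
    then have "E2.emb_sign p * E1.emb_sign p * c (E1.comp p)
        = E2.emb_sign p * (E1.emb_sign p * E1.emb_sign p) * P_glue x p"
      by (simp only: mult.assoc)
    then show ?thesis
      using E1.emb_sign_square E2.glue_embedding_comp[OF x(1)] by (simp add: glue_word_def)
  qed
  ultimately show ?thesis by blast
qed

end

lemma A2_12_two_embeddings_swap: "A2_12_two_embeddings N a b \<iota>1 \<iota>2 \<Longrightarrow> A2_12_two_embeddings N a b \<iota>2 \<iota>1"
  unfolding A2_12_two_embeddings_def by blast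

context A2_12_two_embeddings
begin

lemma glue_transfer_back:
  assumes c': "c' \<in> glue_code" "\<forall>t\<in>-range E2.comp. c' t = 0"
  shows "\<exists>c\<in>glue_code. (\<forall>t\<in>-range E1.comp. c t = 0) \<and>
    (\<forall>p. c' (E2.comp p) = E2.emb_sign p * E1.emb_sign p * c (E1.comp p))"
proof -
  interpret swapped: A2_12_two_embeddings N a b \<iota>2 \<iota>1
    by (rule A2_12_two_embeddings_swap) unfold_locales
  obtain c where c: "c \<in> glue_code" "\<forall>t\<in>-range E1.comp. c t = 0"
    "\<forall>p. c (E1.comp p) = E1.emb_sign p * E2.emb_sign p * c' (E2.comp p)"
    using swapped.glue_transfer[OF c'] by blast
  have "E2.emb_sign p * E1.emb_sign p * c (E1.comp p)
      = (E2.emb_sign p * E2.emb_sign p) * (E1.emb_sign p * E1.emb_sign p) * c' (E2.comp p)" for p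
    unfolding c(3)[rule_format] by (simp add: mult_ac)
  then have "\<forall>p. c' (E2.comp p) = E2.emb_sign p * E1.emb_sign p * c (E1.comp p)"
    using E1.emb_sign_square E2.emb_sign_square by simp
  then show ?thesis using c(1,2) by blast
qed

lemma glue_code_extension:
  "\<exists>\<tau> \<epsilon>. bij_betw \<tau> (-range E1.comp) (-range E2.comp) \<and> (\<forall>t\<in>-range E1.comp. \<epsilon> t * \<epsilon> t = 1) \<and>
    (\<forall>c\<in>glue_code. \<exists>c'\<in>glue_code.
       (\<forall>p. c' (E2.comp p) = E2.emb_sign p * E1.emb_sign p * c (E1.comp p)) \<and>
       (\<forall>t\<in>-range E1.comp. c' (\<tau> t) = \<epsilon> t * c t))"
proof -
  interpret code: self_dual_ternary_code glue_code by (rule self_dual_ternary_code_glue_code)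
  define \<rho> where "\<rho> j = E2.comp (inv E1.comp j)" for j
  define \<delta> where "\<delta> j = E2.emb_sign (inv E1.comp j) * E1.emb_sign (inv E1.comp j)" for j
  have \<rho>: "\<rho> (E1.comp p) = E2.comp p" and \<delta>: "\<delta> (E1.comp p) = E2.emb_sign p * E1.emb_sign p" for p
    unfolding \<rho>_def \<delta>_def using inv_f_f[OF E1.inj_comp] by simp_all
  have "bij_betw \<rho> (range E1.comp) (range E2.comp)"
  proof (rule bij_betw_imageI)
    show "inj_on \<rho> (range E1.comp)"
      by (auto simp: inj_on_def \<rho> dest: injD[OF E2.inj_comp])
    show "\<rho> ` range E1.comp = range E2.comp"
      by (simp add: image_image \<rho>)
  qed
  moreover have "\<delta> j * \<delta> j = 1" if "j \<in> range E1.comp" for j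
    using that \<delta> E1.emb_sign_square E2.emb_sign_square by (auto simp: mult_ac)
  moreover note glue_transfer glue_transfer_back
  ultimately obtain \<tau> \<epsilon> where "bij_betw \<tau> (-range E1.comp) (-range E2.comp)"
    "\<forall>t\<in>-range E1.comp. \<epsilon> t * \<epsilon> t = 1"
    "\<forall>c\<in>glue_code. \<exists>c'\<in>glue_code. (\<forall>j\<in>range E1.comp. c' (\<rho> j) = \<delta> j * c j) \<and>
       (\<forall>t\<in>-range E1.comp. c' (\<tau> t) = \<epsilon> t * c t)"
    using code.code_extend[of "-range E1.comp" "-range E2.comp" \<rho> \<delta>]
      E1.card_Compl_range_comp E2.card_Compl_range_comp \<rho> \<delta> by auto
  then show ?thesis using \<rho> \<delta> by (metis rangeI)
qed

definition tgt_perm :: "(12 \<Rightarrow> 12) \<Rightarrow> 12 \<Rightarrow> 12" where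
  "tgt_perm \<tau> j = (if j \<in> range E1.comp then E2.comp (inv E1.comp j) else \<tau> j)"

definition tgt_X :: "(12 \<Rightarrow> 12) \<Rightarrow> (12 \<Rightarrow> 3) \<Rightarrow> 12 \<Rightarrow> real^24" where
  "tgt_X \<tau> \<epsilon> j = (if j \<in> range E1.comp then \<iota>2 (P_root_r (inv E1.comp j))
     else if \<epsilon> j = 1 then a (\<tau> j) else - a (\<tau> j))"

definition tgt_Y :: "(12 \<Rightarrow> 12) \<Rightarrow> (12 \<Rightarrow> 3) \<Rightarrow> 12 \<Rightarrow> real^24" where
  "tgt_Y \<tau> \<epsilon> j = (if j \<in> range E1.comp then \<iota>2 (P_root_s (inv E1.comp j))
     else if \<epsilon> j = 1 then b (\<tau> j) else - b (\<tau> j))"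

lemma tgt_comp:
  "tgt_perm \<tau> (E1.comp p) = E2.comp p"
  "tgt_X \<tau> \<epsilon> (E1.comp p) = \<iota>2 (P_root_r p)" "tgt_Y \<tau> \<epsilon> (E1.comp p) = \<iota>2 (P_root_s p)"
  unfolding tgt_perm_def tgt_X_def tgt_Y_def using inv_f_f[OF E1.inj_comp] by auto

context
  fixes \<tau> :: "12 \<Rightarrow> 12" and \<epsilon> :: "12 \<Rightarrow> 3"
  assumes \<tau>: "bij_betw \<tau> (-range E1.comp) (-range E2.comp)"
    and \<epsilon>: "\<forall>t\<in>-range E1.comp. \<epsilon> t * \<epsilon> t = 1"
begin

lemma tgt_other: "j \<notin> range E1.comp \<Longrightarrow> tgt_perm \<tau> j = \<tau> j \<and> \<tau> j \<notin> range E2.comp"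
  unfolding tgt_perm_def using \<tau> bij_betwE by fastforce

lemma inj_tgt_perm: "inj (tgt_perm \<tau>)"
proof -
  have "inj_on (tgt_perm \<tau>) (range E1.comp)"
    by (auto simp: inj_on_def tgt_comp dest: injD[OF E2.inj_comp])
  moreover have "inj_on (tgt_perm \<tau>) (-range E1.comp)"
    using \<tau> tgt_other unfolding bij_betw_def inj_on_def by simp
  moreover have "tgt_perm \<tau> ` range E1.comp \<subseteq> range E2.comp"
    by (auto simp: tgt_comp)
  moreover have "tgt_perm \<tau> ` (-range E1.comp) \<subseteq> -range E2.comp"
    using tgt_other by auto
  ultimately have "inj_on (tgt_perm \<tau>) (range E1.comp \<union> -range E1.comp)"
    unfolding inj_on_Un by blast
  then show ?thesis by simp
qed

lemma A2_base_tgt: "A2_base (tgt_perm \<tau> j) (tgt_X \<tau> \<epsilon> j) (tgt_Y \<tau> \<epsilon> j)"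
proof (cases "j \<in> range E1.comp")
  case True
  then obtain p where "j = E1.comp p" by blast
  then show ?thesis using E2.A2_base_comp by (simp add: tgt_comp)
next
  case False
  then show ?thesis
    using tgt_other A2_base_ab A2_base_neg_ab by (simp add: tgt_X_def tgt_Y_def)
qed

lemma tgt_sign_other:
  assumes "j \<notin> range E1.comp"
  shows "base_sign (tgt_perm \<tau> j) (tgt_X \<tau> \<epsilon> j) (tgt_Y \<tau> \<epsilon> j) * base_sign j (E1.emb_X j) (E1.emb_Y j)
    = \<epsilon> j"
proof -
  have "\<epsilon> j * \<epsilon> j = 1" using \<epsilon> assms by simp
  then have "\<epsilon> j = 1 \<or> \<epsilon> j = -1"
    using F3_cases[of "\<epsilon> j"] by auto
  then show ?thesis
    using assms tgt_other[OF assms] E1.emb_XY_other[OF assms] base_sign_ab base_sign_neg_ab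
    by (auto simp: tgt_X_def tgt_Y_def)
qed

lemma tgt_code_condition:
  assumes ext: "\<forall>c\<in>glue_code. \<exists>c'\<in>glue_code.
       (\<forall>p. c' (E2.comp p) = E2.emb_sign p * E1.emb_sign p * c (E1.comp p)) \<and>
       (\<forall>t\<in>-range E1.comp. c' (\<tau> t) = \<epsilon> t * c t)"
    and c: "c \<in> glue_code"
  shows "\<exists>c'\<in>glue_code. \<forall>j. c' (tgt_perm \<tau> j)
    = base_sign (tgt_perm \<tau> j) (tgt_X \<tau> \<epsilon> j) (tgt_Y \<tau> \<epsilon> j) * base_sign j (E1.emb_X j) (E1.emb_Y j)
      * c j"
proof -
  obtain c' where c': "c' \<in> glue_code"
    "\<forall>p. c' (E2.comp p) = E2.emb_sign p * E1.emb_sign p * c (E1.comp p)"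
    "\<forall>t\<in>-range E1.comp. c' (\<tau> t) = \<epsilon> t * c t"
    using ext c by blast
  have "c' (tgt_perm \<tau> j)
    = base_sign (tgt_perm \<tau> j) (tgt_X \<tau> \<epsilon> j) (tgt_Y \<tau> \<epsilon> j) * base_sign j (E1.emb_X j) (E1.emb_Y j)
      * c j" for j
  proof (cases "j \<in> range E1.comp")
    case True
    then obtain p where "j = E1.comp p" by blast
    then show ?thesis
      using c'(2)[rule_format, of p]
        by (simp add: tgt_comp E1.emb_XY_comp E1.emb_sign_def E2.emb_sign_def)
  next
    case False
    then show ?thesis using c'(3) tgt_other tgt_sign_other by simp
  qed
  then show ?thesis using c'(1) by blast
qed

end

lemma linear_map_embeddings:
  assumes "linear \<Phi>"
    and "\<And>p. \<Phi> (\<iota>1 (P_root_r p)) = \<iota>2 (P_root_r p)" "\<And>p. \<Phi> (\<iota>1 (P_root_s p)) = \<iota>2 (P_root_s p)"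
    and x: "x \<in> P_lattice"
  shows "\<Phi> (\<iota>1 x) = \<iota>2 x"
proof -
  obtain A B where
    e: "(3::real) *\<^sub>R x = (\<Sum>p\<in>UNIV. of_int (A p) *\<^sub>R P_root_r p + of_int (B p) *\<^sub>R P_root_s p)"
    using P_lattice_triple[OF x] by blast
  have "3 *\<^sub>R \<Phi> (\<iota>1 x) = \<Phi> (\<iota>1 ((3::real) *\<^sub>R x))"
    using E1.embedding_scaleR_int[OF x, of 3] linear_scale[OF assms(1)] by simp
  also have "\<dots> = \<Phi> (\<Sum>p\<in>UNIV. of_int (A p) *\<^sub>R \<iota>1 (P_root_r p) + of_int (B p) *\<^sub>R \<iota>1 (P_root_s p))"
    unfolding e E1.embedding_lincomb[THEN conjunct2] ..
  also have "\<dots> = (\<Sum>p\<in>UNIV. of_int (A p) *\<^sub>R \<Phi> (\<iota>1 (P_root_r p)) + of_int (B p) *\<^sub>R \<Phi> (\<iota>1 (P_root_s p)))"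
    by (simp only: linear_sum[OF assms(1)] linear_add[OF assms(1)] linear_scale[OF assms(1)])
  also have "\<dots> = (\<Sum>p\<in>UNIV. of_int (A p) *\<^sub>R \<iota>2 (P_root_r p) + of_int (B p) *\<^sub>R \<iota>2 (P_root_s p))"
    by (simp only: assms(2,3))
  also have "\<dots> = \<iota>2 ((3::real) *\<^sub>R x)"
    unfolding e E2.embedding_lincomb[THEN conjunct2] ..
  also have "\<dots> = 3 *\<^sub>R \<iota>2 x"
    using E2.embedding_scaleR_int[OF x, of 3] by simp
  finally show ?thesis by simp
qed

theorem embeddings_conjugate: "\<exists>\<Phi>. lattice_aut N \<Phi> \<and> (\<forall>x\<in>P_lattice. \<Phi> (\<iota>1 x) = \<iota>2 x)"
proof -
  obtain \<tau> \<epsilon> where \<tau>: "bij_betw \<tau> (-range E1.comp) (-range E2.comp)"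
    and \<epsilon>: "\<forall>t\<in>-range E1.comp. \<epsilon> t * \<epsilon> t = 1"
    and ext: "\<forall>c\<in>glue_code. \<exists>c'\<in>glue_code.
       (\<forall>p. c' (E2.comp p) = E2.emb_sign p * E1.emb_sign p * c (E1.comp p)) \<and>
       (\<forall>t\<in>-range E1.comp. c' (\<tau> t) = \<epsilon> t * c t)"
    using glue_code_extension by blast
  let ?\<Phi> = "frame_map E1.emb_X E1.emb_Y (tgt_X \<tau> \<epsilon>) (tgt_Y \<tau> \<epsilon>)"
  note frames = E1.A2_base_emb A2_base_tgt[OF \<tau> \<epsilon>] inj_tgt_perm[OF \<tau> \<epsilon>]
  have "lattice_aut N ?\<Phi>"
    by (rule frame_map_lattice_aut[OF frames]) (rule tgt_code_condition[OF \<tau> \<epsilon> ext])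
  moreover have "?\<Phi> (\<iota>1 (P_root_r p)) = \<iota>2 (P_root_r p)" "?\<Phi> (\<iota>1 (P_root_s p)) = \<iota>2 (P_root_s p)" for p
    using frame_map_base[OF frames, of "E1.comp p"] by (simp_all add: E1.emb_XY_comp tgt_comp)
  then have "?\<Phi> (\<iota>1 x) = \<iota>2 x" if "x \<in> P_lattice" for x
    by (rule linear_map_embeddings[OF linear_frame_map _ _ that])
  ultimately show ?thesis by blast
qed

end

theorem mainTheorem14:
  fixes N :: "(real^24) set" and \<iota>1 \<iota>2 :: "real^3^(3 \<times> 3) \<Rightarrow> real^24"
  assumes "niemeier_A2_12 N"
    and "primitive_embedding \<iota>1 P_lattice N"
    and "primitive_embedding \<iota>2 P_lattice N"
  shows "\<exists>\<Phi>. lattice_aut N \<Phi> \<and> (\<forall>x\<in>P_lattice. \<Phi> (\<iota>1 x) = \<iota>2 x)"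
proof -
  obtain a b where "A2_12_lattice N a b"
    using niemeier_A2_12_lattice[OF assms(1)] .
  then interpret A2_12_two_embeddings N a b \<iota>1 \<iota>2
    by (intro A2_12_two_embeddings.intro A2_12_embedding.intro A2_12_embedding_axioms.intro assms(2,3))
  show ?thesis by (rule embeddings_conjugate)
qed

end
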